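(* Let $m\geq 1$ and let $f\colon\mathbb{P}^2\dashrightarrow\mathbb{P}^2$ be a quadratic transformation defined over $\mathbb{F}_{2^m}$ that is bijective on $\mathbb{F}_{2^m}$-points, i.e. $f$ and $f^{-1}$ are defined at every point of $\mathbb{P}^2(\mathbb{F}_{2^m})$. Then the permutation of $\mathbb{P}^2(\mathbb{F}_{2^m})$ induced by $f$ is odd when $m=1$ and even when $m>1$.
   Context: A quadratic transformation is the birational map $\mathbb{P}^2\dashrightarrow\mathbb{P}^2$ defined by the linear system of conics passing through three non-collinear (geometric) points; up to projective transformations over the algebraic closure it is $[x:y:z]\mapsto[yz:xz:xy]$. *)

theory Defs
  imports "HOL-Algebra.Algebraic_Closure_Type" "HOL-Combinatorics.Permutations"
begin

type_synonym 'a tri = "'a \<times> 'a \<times> 'a"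

definition comp3 :: "'a tri \<Rightarrow> nat \<Rightarrow> 'a" where
  "comp3 v i = (case v of (x, y, z) \<Rightarrow> if i = 0 then x else if i = 1 then y else z)"

definition mk3 :: "(nat \<Rightarrow> 'a) \<Rightarrow> 'a tri" where
  "mk3 f = (f 0, f 1, f 2)"

definition smult3 :: "'a::times \<Rightarrow> 'a tri \<Rightarrow> 'a tri" where
  "smult3 c v = (case v of (x, y, z) \<Rightarrow> (c * x, c * y, c * z))"

definition quadmap :: "(nat \<Rightarrow> nat \<Rightarrow> nat \<Rightarrow> 'a::comm_semiring_1) \<Rightarrow> 'a tri \<Rightarrow> 'a tri" where
  "quadmap C v = mk3 (\<lambda>k. \<Sum>i<3. \<Sum>j<3. C k i j * comp3 v i * comp3 v j)"

definition linmap :: "(nat \<Rightarrow> nat \<Rightarrow> 'a::comm_semiring_1) \<Rightarrow> 'a tri \<Rightarrow> 'a tri" where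
  "linmap M v = mk3 (\<lambda>k. \<Sum>i<3. M k i * comp3 v i)"

definition det3 :: "(nat \<Rightarrow> nat \<Rightarrow> 'a::comm_ring_1) \<Rightarrow> 'a" where
  "det3 M = M 0 0 * (M 1 1 * M 2 2 - M 1 2 * M 2 1)
          - M 0 1 * (M 1 0 * M 2 2 - M 1 2 * M 2 0)
          + M 0 2 * (M 1 0 * M 2 1 - M 1 1 * M 2 0)"

definition stdquad :: "'a::times tri \<Rightarrow> 'a tri" where
  "stdquad v = (case v of (x, y, z) \<Rightarrow> (y * z, x * z, x * y))"

definition lift_coeffs :: "(nat \<Rightarrow> nat \<Rightarrow> nat \<Rightarrow> 'a::field) \<Rightarrow> nat \<Rightarrow> nat \<Rightarrow> nat \<Rightarrow> 'a alg_closure" where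
  "lift_coeffs C = (\<lambda>k i j. to_ac (C k i j))"

(* C (with coefficients in the field 'a) defines a quadratic transformation:
   over the algebraic closure it equals A o stdquad o B with A, B invertible
   (equality of the defining quadratic forms, the scalar being absorbed in A). *)
definition quadratic_transformation :: "(nat \<Rightarrow> nat \<Rightarrow> nat \<Rightarrow> 'a::field) \<Rightarrow> bool" where
  "quadratic_transformation C \<longleftrightarrow>
     (\<exists>A B :: nat \<Rightarrow> nat \<Rightarrow> 'a alg_closure.
        det3 A \<noteq> 0 \<and> det3 B \<noteq> 0 \<and>
        (\<forall>v. quadmap (lift_coeffs C) v = linmap A (stdquad (linmap B v))))"

definition parallel3 :: "'a::comm_ring_1 tri \<Rightarrow> 'a tri \<Rightarrow> bool" where
  "parallel3 u v \<longleftrightarrow> (\<forall>i<3. \<forall>j<3. comp3 u i * comp3 v j = comp3 u j * comp3 v i)"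

(* D (quadratic, coefficients in 'a) defines the inverse rational map of C:
   D o C = id as rational maps over the algebraic closure, i.e. D(C(v)) is
   proportional to v identically and D o C is not identically zero. *)
definition inverse_quadmap :: "(nat \<Rightarrow> nat \<Rightarrow> nat \<Rightarrow> 'a::field) \<Rightarrow> (nat \<Rightarrow> nat \<Rightarrow> nat \<Rightarrow> 'a) \<Rightarrow> bool" where
  "inverse_quadmap D C \<longleftrightarrow>
     (\<forall>v. parallel3 (quadmap (lift_coeffs D) (quadmap (lift_coeffs C) v)) v) \<and>
     (\<exists>v. quadmap (lift_coeffs D) (quadmap (lift_coeffs C) v) \<noteq> (0, 0, 0))"

definition proj_pt :: "'a::field tri \<Rightarrow> 'a tri set" where
  "proj_pt v = {smult3 c v | c. c \<noteq> 0}"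

definition P2 :: "'a::field tri set set" where
  "P2 = {proj_pt v | v. v \<noteq> (0, 0, 0)}"

definition induced_map :: "(nat \<Rightarrow> nat \<Rightarrow> nat \<Rightarrow> 'a::field) \<Rightarrow> 'a tri set \<Rightarrow> 'a tri set" where
  "induced_map C P = (if P \<in> P2 then proj_pt (quadmap C (SOME v. v \<in> P)) else P)"

end

(*
  Over the algebraic closure, C = A \<circ> \<sigma> \<circ> B with \<sigma> [x:y:z] = [yz:xz:xy], so the zeros of C
  are the three base points B\<^sup>-\<^sup>1 e\<^sub>j. As C has coefficients in F_q, the Frobenius x \<mapsto> x\<^sup>q permutes
  them, and it fixes none of them: a representative v with Frob v proportional to v can be
  rescaled to a rational vector, but C has no rational zeros. Hence Frobenius cycles the base
  points, and a representative b with Frob\<^sup>3 b = b gives the F_q-isomorphism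
  t \<mapsto> t b + t\<^sup>q Frob b + t\<^sup>q\<^sup>2 Frob\<^sup>2 b from the field F_(q\<^sup>3) onto F_q\<^sup>3. In these coordinates
  C(t) = N(t) \<Psi>(1/t) with \<Psi> linear and injective, so on P\<^sup>2(F_q) the induced map is a
  collineation composed with the involution [t] \<mapsto> [1/t].

  The involution fixes only [1], since squaring is bijective in characteristic 2; it is a
  product of (q\<^sup>2 + q)/2 transpositions, which is odd exactly for q = 2. The collineation is even:
  transvections are involutions moving q\<^sup>2 points, diagonal maps have odd order dividing q - 1,
  and together they generate GL\<^sub>3(F_q).
*)

theory Submission
  imports Defs "HOL-Combinatorics.Cycles" "HOL-Number_Theory.Residues" "HOL-Library.Product_Plus"
begin

section \<open>Parity of permutations\<close>

lemma involution_transpose_comp: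
  assumes "p \<circ> p = id" "p x \<noteq> x"
  defines "p' \<equiv> transpose x (p x) \<circ> p"
  shows "p' \<circ> p' = id" and "{z. p' z \<noteq> z} = {z. p z \<noteq> z} - {x, p x}"
proof -
  have pp: "p (p z) = z" for z
    using assms(1) by (metis comp_apply id_apply)
  then have p': "p' z = (if z = x \<or> z = p x then z else p z)" for z
    unfolding p'_def by (metis comp_apply transpose_def)
  show "p' \<circ> p' = id"
    by (simp add: fun_eq_iff p') (metis pp)
  show "{z. p' z \<noteq> z} = {z. p z \<noteq> z} - {x, p x}"
    using assms(2) pp by (auto simp: p')
qed

lemma evenperm_involution:
  assumes "finite S" "p permutes S" "p \<circ> p = id"
  shows "evenperm p \<longleftrightarrow> even (card {x. p x \<noteq> x} div 2)"
  using assms(2,3)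
proof (induction "card {x. p x \<noteq> x}" arbitrary: p rule: less_induct)
  case less
  have "{x. p x \<noteq> x} \<subseteq> S"
    using less.prems(1) permutes_not_in by fastforce
  then have fin: "finite {x. p x \<noteq> x}"
    using assms(1) by (rule finite_subset)
  show ?case
  proof (cases "p = id")
    case False
    then obtain x where x: "p x \<noteq> x" by (auto simp: fun_eq_iff)
    define p' where "p' \<equiv> transpose x (p x) \<circ> p"
    note p' = involution_transpose_comp[OF less.prems(2) x, folded p'_def]
    have "x \<in> S" "p x \<in> S"
      using x less.prems(1) permutes_not_in permutes_in_image by fastforce+
    then have p'S: "p' permutes S"
      unfolding p'_def by (intro permutes_compose[OF less.prems(1)] permutes_swap_id)
    have "p (p x) = x" using less.prems(2) by (metis comp_apply id_apply)
    then have sub: "{x, p x} \<subseteq> {z. p z \<noteq> z}"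
      using x by auto
    have card: "card {z. p' z \<noteq> z} = card {z. p z \<noteq> z} - 2"
      using sub x fin by (simp add: p'(2) card_Diff_subset)
    have two: "2 \<le> card {z. p z \<noteq> z}"
      using card_mono[OF fin sub] x by simp
    have "p = transpose x (p x) \<circ> p'"
      by (simp add: p'_def fun_eq_iff)
    moreover have "permutation p'"
      using p'S assms(1) permutation_permutes by blast
    ultimately have "evenperm p \<longleftrightarrow> \<not> evenperm p'"
      using x evenperm_comp[OF permutation_swap_id, of p' x "p x"] evenperm_swap by metis
    also have "\<dots> \<longleftrightarrow> odd ((card {z. p z \<noteq> z} - 2) div 2)"
      using less.hyps[OF _ p'S p'(1)] card two by simp
    also have "\<dots> \<longleftrightarrow> even (card {z. p z \<noteq> z} div 2)"
      using two by presburger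
    finally show ?thesis .
  qed simp
qed

lemma evenperm_funpow: "permutation p \<Longrightarrow> evenperm (p ^^ n) \<longleftrightarrow> even n \<or> evenperm p"
  by (induction n) (auto simp: evenperm_comp permutation_funpow)

lemma evenperm_if_odd_order:
  assumes "permutation p" "p ^^ n = id" "odd n"
  shows "evenperm p"
  using evenperm_funpow[OF assms(1), of n] assms(2,3) by simp

lemma even_half_pow2_square_add_pow2:
  assumes "m \<ge> 1"
  shows "even ((((2::nat) ^ m)\<^sup>2 + 2 ^ m) div 2) \<longleftrightarrow> m \<noteq> 1"
proof -
  obtain k where k: "m = Suc k"
    using assms by (cases m) auto
  have "((2::nat) ^ m)\<^sup>2 + 2 ^ m = 2 * (2 ^ k * (2 ^ m + 1))"
    unfolding k by (simp add: power2_eq_square algebra_simps)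
  then show ?thesis
    using k by (cases k) simp_all
qed

lemma derangement3_is_cycle:
  fixes f :: "nat \<Rightarrow> nat"
  assumes "\<forall>i<3. f i < 3 \<and> f i \<noteq> i" "inj_on f {..<3}"
  shows "f (f (f 0)) = 0" "distinct [0, f 0, f (f 0)]"
proof -
  have "f 0 < 3" "f 0 \<noteq> 0" "f 1 < 3" "f 1 \<noteq> 1" "f 2 < 3" "f 2 \<noteq> 2"
    using assms(1) by auto
  then have "f 0 = 1 \<or> f 0 = 2" "f 1 = 0 \<or> f 1 = 2" "f 2 = 0 \<or> f 2 = 1"
    by presburger+
  moreover have "f 0 \<noteq> f 1" "f 0 \<noteq> f 2" "f 1 \<noteq> f 2"
    using inj_onD[OF assms(2)] by fastforce+
  ultimately show "f (f (f 0)) = 0" "distinct [0, f 0, f (f 0)]"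
    by auto
qed

section \<open>The projective plane\<close>

lemma smult3_simp [simp]: "smult3 c (x, y, z) = (c * x, c * y, c * z)"
  by (simp add: smult3_def)

lemma smult3_1 [simp]: "smult3 1 v = (v :: 'a::comm_semiring_1 tri)"
  by (cases v) simp

lemma smult3_0 [simp]: "smult3 0 v = (0, 0, 0 :: 'a::comm_semiring_1)"
  by (cases v) simp

lemma smult3_smult3 [simp]: "smult3 c (smult3 d v) = smult3 (c * d) (v :: 'a::comm_semiring_1 tri)"
  by (cases v) (simp add: mult.assoc)

lemma smult3_eq_0_iff: "smult3 c v = (0, 0, 0) \<longleftrightarrow> c = 0 \<or> v = (0, 0, 0 :: 'a::field)"
  by (cases v) auto

lemma in_proj_pt_iff: "w \<in> proj_pt v \<longleftrightarrow> (\<exists>c. c \<noteq> 0 \<and> w = smult3 c v)"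
  by (auto simp: proj_pt_def)

lemma in_proj_pt_self: "v \<in> proj_pt (v :: 'a::field tri)"
  unfolding in_proj_pt_iff by (rule exI[of _ 1]) simp

lemma proj_pt_eq_iff:
  "proj_pt w = proj_pt v \<longleftrightarrow> (\<exists>c. c \<noteq> 0 \<and> w = smult3 c (v :: 'a::field tri))"
proof
  assume "proj_pt w = proj_pt v"
  then show "\<exists>c. c \<noteq> 0 \<and> w = smult3 c v"
    using in_proj_pt_self[of w] by (simp add: in_proj_pt_iff)
next
  assume "\<exists>c. c \<noteq> 0 \<and> w = smult3 c v"
  then obtain c where c: "c \<noteq> 0" "w = smult3 c v" by auto
  have "x \<in> proj_pt w \<longleftrightarrow> x \<in> proj_pt v" for x
    unfolding in_proj_pt_iff c(2)
  proof
    assume "\<exists>d. d \<noteq> 0 \<and> x = smult3 d (smult3 c v)"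
    then show "\<exists>d. d \<noteq> 0 \<and> x = smult3 d v"
      using c(1) by (metis smult3_smult3 no_zero_divisors)
  next
    assume "\<exists>d. d \<noteq> 0 \<and> x = smult3 d v"
    then obtain d where "d \<noteq> 0" "x = smult3 d v" by auto
    then show "\<exists>d. d \<noteq> 0 \<and> x = smult3 d (smult3 c v)"
      using c(1) by (intro exI[of _ "d / c"]) auto
  qed
  then show "proj_pt w = proj_pt v" by blast
qed

lemma proj_pt_smult3: "c \<noteq> 0 \<Longrightarrow> proj_pt (smult3 c v) = proj_pt (v :: 'a::field tri)"
  using proj_pt_eq_iff by blast

lemma proj_pt_eq_if_mem: "w \<in> proj_pt v \<Longrightarrow> proj_pt w = proj_pt (v :: 'a::field tri)"
  by (simp only: in_proj_pt_iff proj_pt_eq_iff)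

lemma proj_pt_in_P2: "v \<noteq> (0, 0, 0) \<Longrightarrow> proj_pt v \<in> P2"
  unfolding P2_def by blast

lemma mem_proj_pt_nonzero: "v \<noteq> (0, 0, 0) \<Longrightarrow> w \<in> proj_pt v \<Longrightarrow> w \<noteq> (0, 0, (0::'a::field))"
  by (auto simp: in_proj_pt_iff smult3_eq_0_iff)

lemma P2E:
  assumes "P \<in> (P2 :: 'a::field tri set set)"
  obtains v where "v \<noteq> (0, 0, 0)" "P = proj_pt v"
  using assms by (auto simp: P2_def)

lemma P2_some_rep:
  assumes "P \<in> (P2 :: 'a::field tri set set)"
  shows "(SOME v. v \<in> P) \<noteq> (0, 0, 0)" "proj_pt (SOME v. v \<in> P) = P"
proof -
  obtain v where v: "v \<noteq> (0, 0, 0)" "P = proj_pt v"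
    using assms by (rule P2E)
  then have "(SOME v. v \<in> P) \<in> P"
    using in_proj_pt_self by (metis someI)
  then show "(SOME v. v \<in> P) \<noteq> (0, 0, 0)" "proj_pt (SOME v. v \<in> P) = P"
    using v mem_proj_pt_nonzero proj_pt_eq_if_mem by blast+
qed

lemma finite_P2: "finite (P2 :: 'a::{field,finite} tri set set)"
  by (rule finite_subset[of _ "Pow UNIV"]) auto

definition proj_map :: "('a::field tri \<Rightarrow> 'a tri) \<Rightarrow> 'a tri set \<Rightarrow> 'a tri set" where
  "proj_map g P = (if P \<in> P2 then proj_pt (g (SOME v. v \<in> P)) else P)"

definition proj_compatible :: "('a::field tri \<Rightarrow> 'a tri) \<Rightarrow> bool" where
  "proj_compatible g \<longleftrightarrow> (\<forall>v. v \<noteq> (0, 0, 0) \<longrightarrow> g v \<noteq> (0, 0, 0)) \<and>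
     (\<forall>c v. c \<noteq> 0 \<longrightarrow> (\<exists>d. d \<noteq> 0 \<and> g (smult3 c v) = smult3 d (g v)))"

lemma induced_map_eq_proj_map: "induced_map C = proj_map (quadmap C)"
  by (simp add: fun_eq_iff induced_map_def proj_map_def)

lemma proj_map_outside: "P \<notin> P2 \<Longrightarrow> proj_map g P = P"
  by (simp add: proj_map_def)

lemma proj_map_id: "proj_map (\<lambda>v. v) = id"
  by (auto simp: fun_eq_iff proj_map_def P2_some_rep)

lemma proj_compatible_nonzero: "proj_compatible g \<Longrightarrow> v \<noteq> (0, 0, 0) \<Longrightarrow> g v \<noteq> (0, 0, 0)"
  unfolding proj_compatible_def by blast

lemma proj_compatible_smult3:
  "proj_compatible g \<Longrightarrow> c \<noteq> 0 \<Longrightarrow> \<exists>d. d \<noteq> 0 \<and> g (smult3 c v) = smult3 d (g v)"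
  unfolding proj_compatible_def by blast

lemma proj_compatible_comp:
  assumes "proj_compatible g" "proj_compatible h"
  shows "proj_compatible (g \<circ> h)"
  unfolding proj_compatible_def
proof (intro conjI allI impI)
  show "(g \<circ> h) v \<noteq> (0, 0, 0)" if "v \<noteq> (0, 0, 0)" for v
    using assms that by (simp add: proj_compatible_nonzero)
  show "\<exists>e. e \<noteq> 0 \<and> (g \<circ> h) (smult3 c v) = smult3 e ((g \<circ> h) v)" if c: "c \<noteq> 0" for c v
  proof -
    obtain d where d: "d \<noteq> 0" "h (smult3 c v) = smult3 d (h v)"
      using proj_compatible_smult3[OF assms(2) c] by blast
    obtain e where "e \<noteq> 0" "g (smult3 d (h v)) = smult3 e (g (h v))"
      using proj_compatible_smult3[OF assms(1) d(1)] by blast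
    then show ?thesis using d by auto
  qed
qed

lemma proj_map_proj_pt:
  assumes "proj_compatible g" "v \<noteq> (0, 0, 0)"
  shows "proj_map g (proj_pt v) = proj_pt (g v)"
proof -
  define u where "u = (SOME w. w \<in> proj_pt v)"
  have "u \<in> proj_pt v"
    unfolding u_def using in_proj_pt_self by (metis someI)
  then obtain c where "c \<noteq> 0" "u = smult3 c v"
    by (auto simp: in_proj_pt_iff)
  then obtain d where "d \<noteq> 0" "g u = smult3 d (g v)"
    using proj_compatible_smult3[OF assms(1)] by blast
  then show ?thesis
    using proj_pt_in_P2[OF assms(2)] by (simp add: proj_map_def u_def[symmetric] proj_pt_smult3)
qed

lemma proj_map_in_P2:
  assumes "proj_compatible g" "P \<in> P2"
  shows "proj_map g P \<in> P2"
proof -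
  obtain v where "v \<noteq> (0, 0, 0)" "P = proj_pt v"
    using assms(2) by (rule P2E)
  then show ?thesis
    using assms(1) by (simp add: proj_map_proj_pt proj_compatible_nonzero proj_pt_in_P2)
qed

lemma proj_map_comp:
  assumes "proj_compatible g" "proj_compatible h"
  shows "proj_map (g \<circ> h) = proj_map g \<circ> proj_map h"
proof
  fix P
  show "proj_map (g \<circ> h) P = (proj_map g \<circ> proj_map h) P"
  proof (cases "P \<in> P2")
    case True
    then obtain v where "v \<noteq> (0, 0, 0)" "P = proj_pt v" by (rule P2E)
    then show ?thesis
      using assms proj_compatible_comp[OF assms]
      by (simp add: proj_map_proj_pt proj_compatible_nonzero)
  qed (simp add: proj_map_outside)
qed

lemma proj_map_cong:
  assumes "\<And>v. v \<noteq> (0, 0, 0) \<Longrightarrow> \<exists>c. c \<noteq> 0 \<and> g v = smult3 c (h v)"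
  shows "proj_map g = proj_map h"
proof
  fix P
  show "proj_map g P = proj_map h P"
  proof (cases "P \<in> P2")
    case True
    obtain c where "c \<noteq> 0" "g (SOME v. v \<in> P) = smult3 c (h (SOME v. v \<in> P))"
      using assms P2_some_rep(1)[OF True] by blast
    then show ?thesis
      using True by (simp add: proj_map_def proj_pt_smult3)
  qed (simp add: proj_map_outside)
qed

lemma proj_map_permutes:
  fixes g :: "'a::{field,finite} tri \<Rightarrow> 'a tri"
  assumes "proj_compatible g"
    and inj: "\<And>v w. v \<noteq> (0, 0, 0) \<Longrightarrow> w \<noteq> (0, 0, 0) \<Longrightarrow>
                proj_pt (g v) = proj_pt (g w) \<Longrightarrow> proj_pt v = proj_pt w"
  shows "proj_map g permutes P2"
proof (rule bij_imp_permutes)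
  have "inj_on (proj_map g) P2"
  proof (rule inj_onI)
    fix P Q assume PQ: "P \<in> P2" "Q \<in> P2" "proj_map g P = proj_map g Q"
    obtain v where v: "v \<noteq> (0, 0, 0)" "P = proj_pt v" using PQ(1) by (rule P2E)
    obtain w where w: "w \<noteq> (0, 0, 0)" "Q = proj_pt w" using PQ(2) by (rule P2E)
    show "P = Q"
      using PQ(3) inj[OF v(1) w(1)] v w by (simp add: proj_map_proj_pt[OF assms(1)])
  qed
  moreover have "proj_map g ` P2 \<subseteq> P2"
    using proj_map_in_P2[OF assms(1)] by blast
  ultimately show "bij_betw (proj_map g) P2 P2"
    using endo_inj_surj[OF finite_P2] by (simp add: bij_betw_def)
qed (simp add: proj_map_outside)

lemma permutation_proj_map:
  "proj_map g permutes (P2 :: 'a::{field,finite} tri set set) \<Longrightarrow> permutation (proj_map g)"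
  using finite_P2 permutation_permutes by blast

lemma card_proj_pt:
  assumes "v \<noteq> (0, 0, 0)"
  shows "card (proj_pt (v :: 'a::{field,finite} tri)) = card (UNIV :: 'a set) - 1"
proof -
  have "proj_pt v = (\<lambda>c. smult3 c v) ` (UNIV - {0})"
    by (auto simp: proj_pt_def)
  moreover have "inj (\<lambda>c. smult3 c v)"
  proof (rule injI)
    fix c d assume "smult3 c v = smult3 d v"
    then have "smult3 (c - d) v = (0, 0, 0)"
      by (cases v) (auto simp: algebra_simps)
    then show "c = d"
      using assms by (simp add: smult3_eq_0_iff)
  qed
  ultimately show ?thesis
    by (simp add: card_image inj_on_subset card_Diff_singleton)
qed

lemma card_cone:
  fixes S :: "'a::{field,finite} tri set"
  assumes nz: "\<And>v. v \<in> S \<Longrightarrow> v \<noteq> (0, 0, 0)"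
    and closed: "\<And>v c. v \<in> S \<Longrightarrow> c \<noteq> 0 \<Longrightarrow> smult3 c v \<in> S"
  shows "card S = (card (UNIV :: 'a set) - 1) * card (proj_pt ` S)"
proof -
  have "\<Union> (proj_pt ` S) \<subseteq> S"
    using closed by (auto simp: in_proj_pt_iff)
  moreover have "S \<subseteq> \<Union> (proj_pt ` S)"
    using in_proj_pt_self by blast
  ultimately have "\<Union> (proj_pt ` S) = S" ..
  moreover have "(card (UNIV :: 'a set) - 1) * card (proj_pt ` S) = card (\<Union> (proj_pt ` S))"
  proof (rule card_partition)
    show "card P = card (UNIV :: 'a set) - 1" if P: "P \<in> proj_pt ` S" for P
    proof -
      obtain v where "v \<in> S" "P = proj_pt v"
        using P by blast
      then show ?thesis
        using card_proj_pt[OF nz] by simp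
    qed
    show "P \<inter> Q = {}" if PQ: "P \<in> proj_pt ` S" "Q \<in> proj_pt ` S" "P \<noteq> Q" for P Q
    proof -
      obtain v w where "P = proj_pt v" "Q = proj_pt w"
        using PQ(1,2) by blast
      then have "x \<in> P \<Longrightarrow> x \<in> Q \<Longrightarrow> P = Q" for x
        using proj_pt_eq_if_mem[of x v] proj_pt_eq_if_mem[of x w] by simp
      then show ?thesis
        using PQ(3) by blast
    qed
  qed (rule finite)+
  ultimately show ?thesis by simp
qed

lemma card_tri: "card (UNIV :: 'a::finite tri set) = card (UNIV :: 'a set) ^ 3"
  using card_cartesian_product[of "UNIV :: 'a set" "UNIV :: ('a \<times> 'a) set"]
    card_cartesian_product[of "UNIV :: 'a set" "UNIV :: 'a set"]
  by (simp add: power3_eq_cube)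

lemma card_P2:
  assumes "card (UNIV :: 'a::{field,finite} set) = q"
  shows "card (P2 :: 'a tri set set) = q\<^sup>2 + q + 1"
proof -
  have "q \<ge> 2"
    using card_mono[of UNIV "{0, 1::'a}"] assms by simp
  let ?V = "UNIV - {(0, 0, 0) :: 'a tri}"
  have "P2 = proj_pt ` ?V"
    by (auto simp: P2_def)
  moreover have "card ?V = q ^ 3 - 1"
    using card_tri[where 'a='a] assms by (simp add: card_Diff_singleton)
  ultimately have "(q - 1) * card (P2 :: 'a tri set set) = q ^ 3 - 1"
    using card_cone[of ?V] assms by (simp add: smult3_eq_0_iff)
  also have "q ^ 3 - 1 = (q - 1) * (q\<^sup>2 + q + 1)"
    using \<open>q \<ge> 2\<close> by (cases q) (simp_all add: algebra_simps power2_eq_square power3_eq_cube)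
  finally show ?thesis
    using \<open>q \<ge> 2\<close> by (subst (asm) mult_left_cancel) auto
qed

section \<open>Finite fields of characteristic 2\<close>

lemma CHAR_eq_2_if_card:
  assumes "card (UNIV :: 'a::{field,finite} set) = 2 ^ m" "m \<ge> 1"
  shows "CHAR('a) = 2"
proof -
  have "CHAR('a) > 0"
    by (rule finite_imp_CHAR_pos) simp
  then have "prime CHAR('a)"
    by (rule prime_CHAR_semidom)
  moreover have "CHAR('a) dvd 2 ^ m"
    using CHAR_dvd_CARD[where 'a='a] assms(1) by simp
  ultimately show ?thesis
    using prime_dvd_power primes_dvd_imp_eq two_is_prime_nat by blast
qed

lemma power_card_eq_self:
  fixes x :: "'a::{field,finite}"
  shows "x ^ card (UNIV :: 'a set) = x"
proof (cases "x = 0")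
  case False
  define U where "U = (UNIV :: 'a set) - {0}"
  have "(\<Prod>y\<in>U. x * y) = (\<Prod>y\<in>U. y)"
    by (rule prod.reindex_bij_witness[of _ "\<lambda>y. y / x" "\<lambda>y. x * y"]) (use False in \<open>auto simp: U_def\<close>)
  then have "x ^ card U = 1"
    by (simp add: prod.distrib U_def)
  moreover have "card (UNIV :: 'a set) = Suc (card U)"
    using finite_UNIV_card_ge_0[where 'a='a] by (simp add: U_def card_Diff_singleton)
  ultimately show ?thesis by simp
qed (simp add: finite_UNIV_card_ge_0)

lemma power_two_power_add:
  "CHAR('a::comm_semiring_1) = 2 \<Longrightarrow> (x + y :: 'a) ^ (2 ^ n) = x ^ (2 ^ n) + y ^ (2 ^ n)"
  by (rule freshmans_dream') simp_all

lemma power_two_power_inj: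
  fixes x y :: "'a::field"
  assumes "CHAR('a) = 2" "x ^ (2 ^ n) = y ^ (2 ^ n)"
  shows "x = y"
proof -
  have "(x - y) ^ (2 ^ n) = x ^ (2 ^ n) - y ^ (2 ^ n)"
    using assms(1) by (simp add: minus_CHAR_2 power_two_power_add)
  then show ?thesis
    using assms(2) by simp
qed

lemma square_root_exists:
  fixes x :: "'a::{field,finite}"
  assumes "card (UNIV :: 'a set) = 2 ^ m" "m \<ge> 1"
  shows "\<exists>y. y\<^sup>2 = x"
proof
  have "(x ^ 2 ^ (m - 1))\<^sup>2 = x ^ 2 ^ m"
    using assms(2) by (simp flip: power_mult power_Suc2)
  then show "(x ^ 2 ^ (m - 1))\<^sup>2 = x"
    using power_card_eq_self[of x] assms(1) by simp
qed

lemma power_card_eq_self_iff_in_range_to_ac: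
  fixes x :: "'a::{field,finite} alg_closure"
  assumes "card (UNIV :: 'a set) = q"
  shows "x ^ q = x \<longleftrightarrow> x \<in> range to_ac"
proof
  assume "x \<in> range to_ac"
  then obtain y where "x = to_ac y" ..
  then show "x ^ q = x"
    using power_card_eq_self[of y] assms by (simp flip: to_ac_power)
next
  assume x: "x ^ q = x"
  have "q \<ge> 2"
    using card_mono[of UNIV "{0, 1::'a}"] assms by simp
  define p :: "'a alg_closure poly" where "p = monom 1 q + [:0, -1:]"
  have "degree p = q"
    unfolding p_def using \<open>q \<ge> 2\<close> by (subst degree_add_eq_left) (simp_all add: degree_monom_eq)
  then have "p \<noteq> 0"
    using \<open>q \<ge> 2\<close> by auto
  have root: "poly p y = 0 \<longleftrightarrow> y ^ q = y" for y
    by (simp add: p_def poly_monom)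
  have "range to_ac \<subseteq> {y. poly p y = 0}"
    using root power_card_eq_self assms by (auto simp flip: to_ac_power)
  moreover have "card {y. poly p y = 0} \<le> card (range (to_ac :: 'a \<Rightarrow> 'a alg_closure))"
    using card_poly_roots_bound[OF \<open>p \<noteq> 0\<close>] \<open>degree p = q\<close> assms
    by (simp add: card_image inj_to_ac)
  ultimately have "range to_ac = {y. poly p y = 0}"
    using poly_roots_finite[OF \<open>p \<noteq> 0\<close>] by (intro card_subset_eq) (auto intro: le_antisym card_mono)
  then show "x \<in> range to_ac"
    using x root by auto
qed

section \<open>Linear and quadratic maps of triples\<close>

lemma zero_tri: "(0 :: 'a::zero tri) = (0, 0, 0)"
  by (simp add: zero_prod_def)

lemma comp3_simps [simp]:
  "comp3 (x, y, z) 0 = x" "comp3 (x, y, z) (Suc 0) = y" "comp3 (x, y, z) 2 = z"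
  by (simp_all add: comp3_def)

lemma comp3_zero [simp]: "comp3 (0, 0, 0) i = 0"
  by (simp add: comp3_def)

lemma comp3_add: "comp3 (u + w) i = comp3 u i + comp3 (w :: 'a::plus tri) i"
  by (cases u; cases w) (simp add: comp3_def)

lemma comp3_smult3: "comp3 (smult3 c u) i = c * comp3 (u :: 'a::times tri) i"
  by (cases u) (simp add: comp3_def)

lemma smult3_add: "smult3 c (u + w) = smult3 c u + smult3 c (w :: 'a::comm_semiring_1 tri)"
  by (cases u; cases w) (simp add: algebra_simps)

lemma smult3_zero [simp]: "smult3 c (0 :: 'a::comm_semiring_1 tri) = 0"
  by (simp add: zero_tri)

lemma smult3_add_left: "smult3 (c + d) u = smult3 c u + smult3 d (u :: 'a::comm_semiring_1 tri)"
  by (cases u) (simp add: algebra_simps)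

lemma sum_lessThan_3: "(\<Sum>i<(3::nat). f i) = f 0 + f 1 + (f 2 :: 'a::comm_monoid_add)"
  by (simp add: numeral_3_eq_3 numeral_2_eq_2 lessThan_Suc add.commute add.left_commute)

lemma add_self_tri: "CHAR('a::comm_ring_1) = 2 \<Longrightarrow> v + v = (0 :: 'a tri)"
  by (cases v) (simp add: zero_tri flip: minus_CHAR_2)

definition lincomb3 :: "'a::comm_semiring_1 tri \<Rightarrow> 'a tri \<Rightarrow> 'a tri \<Rightarrow> 'a tri \<Rightarrow> 'a tri" where
  "lincomb3 a b c x = smult3 (comp3 x 0) a + smult3 (comp3 x 1) b + smult3 (comp3 x 2) c"

lemma lincomb3_simp:
  "lincomb3 (a0, a1, a2) (b0, b1, b2) (c0, c1, c2) (x, y, z) =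
     (x * a0 + y * b0 + z * c0, x * a1 + y * b1 + z * c1, x * a2 + y * b2 + z * c2)"
  by (simp add: lincomb3_def)

lemma lincomb3_add: "lincomb3 a b c (x + y) = lincomb3 a b c x + lincomb3 a b c y"
  by (simp add: lincomb3_def comp3_add smult3_add_left algebra_simps)

lemma lincomb3_smult3: "lincomb3 a b c (smult3 k x) = smult3 k (lincomb3 a b c x)"
  by (simp add: lincomb3_def comp3_smult3 smult3_add)

definition bilmap :: "(nat \<Rightarrow> nat \<Rightarrow> nat \<Rightarrow> 'a::comm_semiring_1) \<Rightarrow> 'a tri \<Rightarrow> 'a tri \<Rightarrow> 'a tri" where
  "bilmap C u w = mk3 (\<lambda>k. \<Sum>i<3. \<Sum>j<3. C k i j * comp3 u i * comp3 w j)"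

definition polar :: "(nat \<Rightarrow> nat \<Rightarrow> nat \<Rightarrow> 'a::comm_semiring_1) \<Rightarrow> 'a tri \<Rightarrow> 'a tri \<Rightarrow> 'a tri" where
  "polar C u w = bilmap C u w + bilmap C w u"

lemma quadmap_eq_bilmap: "quadmap C v = bilmap C v v"
  by (simp add: quadmap_def bilmap_def)

lemma bilmap_add_left: "bilmap C (u + u') w = bilmap C u w + bilmap C u' w"
  by (simp add: bilmap_def mk3_def comp3_add algebra_simps sum.distrib)

lemma bilmap_add_right: "bilmap C w (u + u') = bilmap C w u + bilmap C w u'"
  by (simp add: bilmap_def mk3_def comp3_add algebra_simps sum.distrib)

lemma bilmap_smult3_left: "bilmap C (smult3 c u) w = smult3 c (bilmap C u w)"
  by (simp add: bilmap_def mk3_def comp3_smult3 sum_distrib_left algebra_simps)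

lemma bilmap_smult3_right: "bilmap C w (smult3 c u) = smult3 c (bilmap C w u)"
  by (simp add: bilmap_def mk3_def comp3_smult3 sum_distrib_left algebra_simps)

lemma polar_commute: "polar C u w = polar C w u"
  by (simp add: polar_def add.commute)

lemma quadmap_smult3: "quadmap C (smult3 c v) = smult3 (c * c) (quadmap C v)"
  by (simp add: quadmap_eq_bilmap bilmap_smult3_left bilmap_smult3_right)

lemma quadmap_lincomb3:
  fixes a b c :: "'a::comm_ring_1 tri"
  assumes "quadmap C a = (0, 0, 0)" "quadmap C b = (0, 0, 0)" "quadmap C c = (0, 0, 0)"
  shows "quadmap C (lincomb3 a b c (x0, x1, x2)) =
    smult3 (x1 * x2) (polar C b c) + smult3 (x0 * x2) (polar C a c) + smult3 (x0 * x1) (polar C a b)"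
  using assms
  by (simp add: lincomb3_def quadmap_eq_bilmap polar_def bilmap_add_left bilmap_add_right
      bilmap_smult3_left bilmap_smult3_right smult3_add zero_tri[symmetric] algebra_simps)

definition adj3 :: "(nat \<Rightarrow> nat \<Rightarrow> 'a::comm_ring_1) \<Rightarrow> nat \<Rightarrow> nat \<Rightarrow> 'a" where
  "adj3 M i j = M ((j + 1) mod 3) ((i + 1) mod 3) * M ((j + 2) mod 3) ((i + 2) mod 3)
              - M ((j + 1) mod 3) ((i + 2) mod 3) * M ((j + 2) mod 3) ((i + 1) mod 3)"

lemma linmap_simp: "linmap M (x, y, z) =
  (M 0 0 * x + M 0 1 * y + M 0 2 * z, M 1 0 * x + M 1 1 * y + M 1 2 * z, M 2 0 * x + M 2 1 * y + M 2 2 * z)"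
  by (simp add: linmap_def mk3_def sum_lessThan_3)

lemma linmap_adj3_linmap: "linmap (adj3 M) (linmap M v) = smult3 (det3 M) v"
  by (cases v) (simp add: linmap_simp adj3_def det3_def numeral_2_eq_2 algebra_simps)

lemma linmap_linmap_adj3: "linmap M (linmap (adj3 M) v) = smult3 (det3 M) v"
  by (cases v) (simp add: linmap_simp adj3_def det3_def numeral_2_eq_2 algebra_simps)

lemma linmap_add: "linmap M (u + w) = linmap M u + linmap M w"
  by (cases u; cases w) (simp add: linmap_simp algebra_simps)

lemma linmap_smult3: "linmap M (smult3 c u) = smult3 c (linmap M u)"
  by (cases u) (simp add: linmap_simp algebra_simps)

lemma linmap_zero: "linmap M (0, 0, 0) = (0, 0, 0)"
  by (simp add: linmap_simp)

lemma linmap_eq_0_iff: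
  assumes "det3 M \<noteq> 0"
  shows "linmap M v = (0, 0, 0) \<longleftrightarrow> v = (0, 0, (0 :: 'a::field))"
proof
  assume "linmap M v = (0, 0, 0)"
  then have "smult3 (det3 M) v = (0, 0, 0)"
    using linmap_adj3_linmap[of M v] by (simp add: linmap_zero)
  then show "v = (0, 0, 0)"
    using assms by (simp add: smult3_eq_0_iff)
qed (simp add: linmap_zero)

lemma inj_linmap:
  assumes "det3 M \<noteq> 0"
  shows "inj (linmap (M :: nat \<Rightarrow> nat \<Rightarrow> 'a::field))"
proof (rule injI)
  fix u w assume "linmap M u = linmap M w"
  then have "linmap M (u - w) = (0, 0, 0)"
    by (cases u; cases w) (simp add: linmap_simp algebra_simps)
  then show "u = w"
    using assms by (cases u; cases w) (simp add: linmap_eq_0_iff)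
qed

section \<open>Collineations are even permutations in characteristic 2\<close>

definition linear3 :: "('a::comm_semiring_1 tri \<Rightarrow> 'a tri) \<Rightarrow> bool" where
  "linear3 L \<longleftrightarrow> (\<forall>u w. L (u + w) = L u + L w) \<and> (\<forall>c u. L (smult3 c u) = smult3 c (L u))"

lemma linear3_add: "linear3 L \<Longrightarrow> L (u + w) = L u + L w"
  unfolding linear3_def by blast

lemma linear3_smult3: "linear3 L \<Longrightarrow> L (smult3 c u) = smult3 c (L u)"
  unfolding linear3_def by blast

lemma linear3_zero: "linear3 L \<Longrightarrow> L (0, 0, 0) = (0, 0, 0)"
  using linear3_smult3[of L 0 "(0, 0, 0)"] by simp

lemma linear3_comp: "linear3 L1 \<Longrightarrow> linear3 L2 \<Longrightarrow> linear3 (L1 \<circ> L2)"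
  unfolding linear3_def comp_def by metis

lemma linear3_lincomb3: "linear3 (lincomb3 a b c)"
  unfolding linear3_def by (simp add: lincomb3_add lincomb3_smult3)

lemma linear3_eq_lincomb3:
  assumes "linear3 L"
  shows "L = lincomb3 (L (1, 0, 0)) (L (0, 1, 0)) (L (0, 0, 1))"
proof
  fix v :: "'a tri"
  obtain x y z where v: "v = (x, y, z)"
    by (cases v)
  then have "v = smult3 x (1, 0, 0) + smult3 y (0, 1, 0) + smult3 z (0, 0, 1)"
    by simp
  then have "L v = smult3 x (L (1, 0, 0)) + smult3 y (L (0, 1, 0)) + smult3 z (L (0, 0, 1))"
    using linear3_add[OF assms] linear3_smult3[OF assms] by metis
  then show "L v = lincomb3 (L (1, 0, 0)) (L (0, 1, 0)) (L (0, 0, 1)) v"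
    using v by (simp add: lincomb3_def)
qed

lemma comp_lincomb3:
  "linear3 L \<Longrightarrow> L \<circ> lincomb3 a b c = lincomb3 (L a) (L b) (L c)"
  by (simp add: fun_eq_iff lincomb3_def linear3_add linear3_smult3)

lemma proj_compatible_linear3:
  fixes L :: "'a::field tri \<Rightarrow> 'a tri"
  assumes "linear3 L" "inj L"
  shows "proj_compatible L"
  unfolding proj_compatible_def
proof (intro conjI allI impI)
  fix v :: "'a tri" assume "v \<noteq> (0, 0, 0)"
  then show "L v \<noteq> (0, 0, 0)"
    using linear3_zero[OF assms(1)] assms(2) by (metis injD)
next
  fix c :: 'a and v :: "'a tri" assume "c \<noteq> 0"
  then show "\<exists>d. d \<noteq> 0 \<and> L (smult3 c v) = smult3 d (L v)"
    using linear3_smult3[OF assms(1)] by blast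
qed

lemma proj_map_permutes_linear3:
  fixes L :: "'a::{field,finite} tri \<Rightarrow> 'a tri"
  assumes "linear3 L" "inj L"
  shows "proj_map L permutes P2"
proof (rule proj_map_permutes[OF proj_compatible_linear3[OF assms]])
  fix v w :: "'a tri" assume "proj_pt (L v) = proj_pt (L w)"
  then obtain c where c: "c \<noteq> 0" "L v = smult3 c (L w)"
    using proj_pt_eq_iff by blast
  then have "v = smult3 c w"
    using assms linear3_smult3 by (metis injD)
  then show "proj_pt v = proj_pt w"
    using c(1) proj_pt_smult3 by simp
qed

lemma evenperm_proj_map_comp:
  fixes L1 L2 :: "'a::{field,finite} tri \<Rightarrow> 'a tri"
  assumes "linear3 L1" "inj L1" "linear3 L2" "inj L2"
  shows "evenperm (proj_map (L1 \<circ> L2)) \<longleftrightarrow> evenperm (proj_map L1) = evenperm (proj_map L2)"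
  using assms
  by (simp add: proj_map_comp proj_compatible_linear3 evenperm_comp
      permutation_proj_map proj_map_permutes_linear3)

definition unit3 :: "nat \<Rightarrow> 'a::zero_neq_one tri" where
  "unit3 i = (if i = 0 then (1, 0, 0) else if i = 1 then (0, 1, 0) else (0, 0, 1))"

definition transvection :: "nat \<Rightarrow> nat \<Rightarrow> 'a::comm_ring_1 \<Rightarrow> 'a tri \<Rightarrow> 'a tri" where
  "transvection i j c v = v + smult3 (c * comp3 v j) (unit3 i)"

lemma comp3_unit3: "i < 3 \<Longrightarrow> j < 3 \<Longrightarrow> comp3 (unit3 i) j = (if i = j then 1 else 0)"
  by (auto simp: unit3_def comp3_def eval_nat_numeral less_Suc_eq)

lemma unit3_expansion:
  assumes "distinct [i, j, k]" "i < 3" "j < 3" "k < 3"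
  shows "smult3 (comp3 w i) (unit3 i) + smult3 (comp3 w j) (unit3 j) + smult3 (comp3 w k) (unit3 k) =
    (w :: 'a::comm_semiring_1 tri)"
proof -
  have "i = 0 \<or> i = 1 \<or> i = 2" "j = 0 \<or> j = 1 \<or> j = 2" "k = 0 \<or> k = 1 \<or> k = 2"
    using assms(2-4) by presburger+
  then show ?thesis
    using assms(1) by (cases w) (auto simp: unit3_def comp3_def)
qed

lemma linear3_transvection: "linear3 (transvection i j c)"
  unfolding linear3_def transvection_def
  by (auto simp: comp3_add comp3_smult3 smult3_add_left smult3_add algebra_simps)

lemma comp3_transvection: "i < 3 \<Longrightarrow> j < 3 \<Longrightarrow> i \<noteq> j \<Longrightarrow> comp3 (transvection i j c v) j = comp3 v j"
  by (simp add: transvection_def comp3_add comp3_smult3 comp3_unit3)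

lemma transvection_transvection:
  assumes "CHAR('a::comm_ring_1) = 2" "i < 3" "j < 3" "i \<noteq> j"
  shows "transvection i j c (transvection i j c v) = (v :: 'a tri)"
proof -
  have "comp3 (transvection i j c v) j = comp3 v j"
    using assms(2-4) by (rule comp3_transvection)
  then have "transvection i j c (transvection i j c v) =
      v + (smult3 (c * comp3 v j) (unit3 i) + smult3 (c * comp3 v j) (unit3 i))"
    by (simp add: transvection_def add.assoc)
  then show ?thesis
    using add_self_tri[OF assms(1)] by simp
qed

lemma inj_transvection:
  assumes "CHAR('a::comm_ring_1) = 2" "i < 3" "j < 3" "i \<noteq> j"
  shows "inj (transvection i j (c :: 'a))"
  by (metis injI transvection_transvection[OF assms])

lemma proj_pt_transvection_eq_iff:
  fixes v :: "'a::field tri"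
  assumes "i < 3" "j < 3" "i \<noteq> j" "c \<noteq> 0"
  shows "proj_pt (transvection i j c v) = proj_pt v \<longleftrightarrow> comp3 v j = 0"
proof
  assume "proj_pt (transvection i j c v) = proj_pt v"
  then obtain d where d: "transvection i j c v = smult3 d v"
    by (auto simp: proj_pt_eq_iff)
  show "comp3 v j = 0"
  proof (rule ccontr)
    assume "comp3 v j \<noteq> 0"
    then have "d = 1"
      using d comp3_transvection[OF assms(1-3), of c v] by (simp add: comp3_smult3)
    then have "comp3 (smult3 (c * comp3 v j) (unit3 i)) i = comp3 (0 :: 'a tri) i"
      using d by (simp add: transvection_def)
    then have "c * comp3 v j * comp3 (unit3 i :: 'a tri) i = 0"
      by (simp add: comp3_smult3 zero_tri)
    then show False
      using assms(1,4) \<open>comp3 v j \<noteq> 0\<close> by (simp add: comp3_unit3)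
  qed
qed (simp add: transvection_def flip: zero_tri)

lemma proj_map_transvection_moved:
  fixes c :: "'a::{field,finite}"
  assumes "CHAR('a) = 2" "i < 3" "j < 3" "i \<noteq> j" "c \<noteq> 0"
  shows "{P. proj_map (transvection i j c) P \<noteq> P} = proj_pt ` {v. comp3 v j \<noteq> 0}"
proof -
  have compat: "proj_compatible (transvection i j c)"
    using assms by (simp add: proj_compatible_linear3 linear3_transvection inj_transvection)
  have "P \<in> P2 \<and> proj_map (transvection i j c) P \<noteq> P \<longleftrightarrow> P \<in> proj_pt ` {v. comp3 v j \<noteq> 0}" for P
  proof
    assume P: "P \<in> P2 \<and> proj_map (transvection i j c) P \<noteq> P"
    then have "P \<in> P2" ..
    then obtain v where "v \<noteq> (0, 0, 0)" "P = proj_pt v"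
      by (rule P2E)
    then show "P \<in> proj_pt ` {v. comp3 v j \<noteq> 0}"
      using P proj_pt_transvection_eq_iff[OF assms(2-5)] by (auto simp: proj_map_proj_pt[OF compat])
  next
    assume "P \<in> proj_pt ` {v. comp3 v j \<noteq> 0}"
    then obtain v where v: "comp3 v j \<noteq> 0" "P = proj_pt v"
      by blast
    then have "v \<noteq> (0, 0, 0)"
      by auto
    then show "P \<in> P2 \<and> proj_map (transvection i j c) P \<noteq> P"
      using v proj_pt_transvection_eq_iff[OF assms(2-5)]
      by (simp add: proj_map_proj_pt[OF compat] proj_pt_in_P2)
  qed
  then show ?thesis
    using proj_map_outside by blast
qed

lemma card_comp3_eq_0:
  assumes "j < 3"
  shows "card {v. comp3 v j = (0 :: 'a::{zero,finite})} = card (UNIV :: 'a set) ^ 2"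
proof -
  have "card (UNIV :: ('a \<times> 'a) set) = card (UNIV :: 'a set) ^ 2"
    by (simp add: power2_eq_square flip: card_cartesian_product)
  moreover consider "j = 0" | "j = 1" | "j = 2"
    using assms by linarith
  then have "\<exists>f. inj f \<and> {v :: 'a tri. comp3 v j = 0} = range (f :: 'a \<times> 'a \<Rightarrow> 'a tri)"
  proof cases
    case 1
    then show ?thesis
      by (intro exI[of _ "\<lambda>(y, z). (0, y, z)"]) (auto simp: inj_def comp3_def image_def)
  next
    case 2
    then show ?thesis
      by (intro exI[of _ "\<lambda>(x, z). (x, 0, z)"]) (auto simp: inj_def comp3_def image_def)
  next
    case 3
    then show ?thesis
      by (intro exI[of _ "\<lambda>(x, y). (x, y, 0)"]) (auto simp: inj_def comp3_def image_def)
  qed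
  ultimately show ?thesis
    by (auto simp: card_image)
qed

lemma evenperm_transvection:
  fixes c :: "'a::{field,finite}"
  assumes "CHAR('a) = 2" "i < 3" "j < 3" "i \<noteq> j"
  shows "evenperm (proj_map (transvection i j c))"
proof (cases "c = 0")
  case True
  then have "transvection i j c = (\<lambda>v. v)"
    by (simp add: fun_eq_iff transvection_def zero_tri)
  then show ?thesis
    by (simp add: proj_map_id)
next
  case False
  let ?T = "transvection i j c" and ?q = "card (UNIV :: 'a set)"
  let ?S = "{v :: 'a tri. comp3 v j \<noteq> 0}"
  have "even ?q" "?q \<ge> 2"
    using CHAR_dvd_CARD[where 'a='a] assms(1) card_mono[of UNIV "{0, 1::'a}"] by simp_all
  have "card ?S = ?q ^ 3 - ?q ^ 2"
    using card_Diff_subset[of "{v :: 'a tri. comp3 v j = 0}" UNIV]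
      card_comp3_eq_0[OF assms(3), where 'a='a]
    by (simp add: card_tri set_diff_eq)
  also have "\<dots> = (?q - 1) * ?q ^ 2"
    by (simp add: power2_eq_square power3_eq_cube algebra_simps diff_mult_distrib)
  finally have S: "card ?S = (?q - 1) * ?q ^ 2" .
  have "card ?S = (?q - 1) * card (proj_pt ` ?S)"
    by (rule card_cone) (auto simp: comp3_smult3 comp3_def split: if_splits)
  then have "(?q - 1) * card (proj_pt ` ?S) = (?q - 1) * ?q ^ 2"
    by (simp only: S)
  then have card: "card (proj_pt ` ?S) = ?q ^ 2"
    using \<open>?q \<ge> 2\<close> by (subst (asm) mult_left_cancel) auto
  have lin: "linear3 ?T" "inj ?T"
    using assms by (simp_all add: linear3_transvection inj_transvection)
  have "?T \<circ> ?T = (\<lambda>v. v)"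
    using transvection_transvection[OF assms] by (simp add: fun_eq_iff)
  then have "proj_map ?T \<circ> proj_map ?T = id"
    using proj_map_comp[of ?T ?T] proj_compatible_linear3[OF lin] by (simp add: proj_map_id)
  then have "evenperm (proj_map ?T) \<longleftrightarrow> even (?q ^ 2 div 2)"
    using evenperm_involution[OF finite_P2 proj_map_permutes_linear3[OF lin]] card
      proj_map_transvection_moved[OF assms False] by simp
  then show ?thesis
    using \<open>even ?q\<close> by (auto elim!: evenE simp: power2_eq_square)
qed

definition diag3 :: "'a::comm_semiring_1 \<Rightarrow> 'a \<Rightarrow> 'a \<Rightarrow> 'a tri \<Rightarrow> 'a tri" where
  "diag3 a b c = lincomb3 (a, 0, 0) (0, b, 0) (0, 0, c)"

lemma diag3_simp: "diag3 a b c (x, y, z) = (a * x, b * y, c * z)"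
  by (simp add: diag3_def lincomb3_simp mult.commute)

lemma diag3_comp: "diag3 a b c \<circ> diag3 a' b' c' = diag3 (a * a') (b * b') (c * c')"
  by (auto simp: fun_eq_iff diag3_simp mult.assoc)

lemma diag3_1: "diag3 1 1 1 = (\<lambda>v. v)"
  by (auto simp: fun_eq_iff diag3_simp)

lemma inj_diag3: "a \<noteq> 0 \<Longrightarrow> b \<noteq> 0 \<Longrightarrow> c \<noteq> 0 \<Longrightarrow> inj (diag3 a b (c :: 'a::field))"
  by (auto simp: inj_def diag3_simp)

text \<open>The permutation has odd order dividing \<open>q - 1\<close>.\<close>

lemma evenperm_diag3:
  fixes a b c :: "'a::{field,finite}"
  assumes "CHAR('a) = 2" "a \<noteq> 0" "b \<noteq> 0" "c \<noteq> 0"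
  shows "evenperm (proj_map (diag3 a b c))"
proof -
  let ?q = "card (UNIV :: 'a set)"
  have lin: "linear3 (diag3 a' b' c')" for a' b' c' :: 'a
    by (simp add: diag3_def linear3_lincomb3)
  have compat: "proj_compatible (diag3 a' b' c')" if "a' \<noteq> 0" "b' \<noteq> 0" "c' \<noteq> 0" for a' b' c' :: 'a
    using proj_compatible_linear3[OF lin inj_diag3[OF that]] .
  have pow: "proj_map (diag3 a b c) ^^ n = proj_map (diag3 (a ^ n) (b ^ n) (c ^ n))" for n
  proof (induction n)
    case 0
    show ?case by (simp add: diag3_1 proj_map_id)
  next
    case (Suc n)
    have "proj_map (diag3 a b c) ^^ Suc n = proj_map (diag3 a b c) \<circ> proj_map (diag3 (a ^ n) (b ^ n) (c ^ n))"
      using Suc.IH by simp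
    also have "\<dots> = proj_map (diag3 a b c \<circ> diag3 (a ^ n) (b ^ n) (c ^ n))"
      using assms by (simp add: proj_map_comp compat)
    finally show ?case
      by (simp add: diag3_comp)
  qed
  have "?q > 0"
    by (simp add: finite_UNIV_card_ge_0)
  have "x ^ (?q - 1) = 1" if "x \<noteq> 0" for x :: 'a
  proof -
    have "x * x ^ (?q - 1) = x"
      using power_card_eq_self[of x] \<open>?q > 0\<close> by (metis Suc_diff_1 power_Suc)
    then show ?thesis
      using that by simp
  qed
  then have "proj_map (diag3 a b c) ^^ (?q - 1) = id"
    using assms by (simp add: pow diag3_1 proj_map_id)
  moreover have "odd (?q - 1)"
    using CHAR_dvd_CARD[where 'a='a] assms(1) \<open>?q > 0\<close> by presburger
  moreover have "permutation (proj_map (diag3 a b c))"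
    using proj_map_permutes_linear3[OF lin inj_diag3] assms permutation_proj_map by blast
  ultimately show ?thesis
    using evenperm_if_odd_order by blast
qed

lemma
  fixes L :: "'a::{field,finite} tri \<Rightarrow> 'a tri"
  assumes "CHAR('a) = 2" "i < 3" "j < 3" "i \<noteq> j" "linear3 L" "inj L"
  shows evenperm_transvection_comp: "evenperm (proj_map (transvection i j c \<circ> L)) = evenperm (proj_map L)"
    and evenperm_comp_transvection: "evenperm (proj_map (L \<circ> transvection i j c)) = evenperm (proj_map L)"
  using assms evenperm_proj_map_comp[of "transvection i j c" L] evenperm_proj_map_comp[of L "transvection i j c"]
  by (simp_all add: linear3_transvection inj_transvection evenperm_transvection)

lemma evenperm_transvection_sandwich:
  fixes L :: "'a::{field,finite} tri \<Rightarrow> 'a tri" and c c' :: 'a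
  assumes "CHAR('a) = 2" "i < 3" "j < 3" "i \<noteq> j" "i' < 3" "j' < 3" "i' \<noteq> j'" "linear3 L" "inj L"
  defines "M \<equiv> transvection i j c \<circ> L \<circ> transvection i' j' c'"
  shows "evenperm (proj_map M) = evenperm (proj_map L)" "linear3 M" "inj M"
proof -
  have TL: "linear3 (transvection i j c \<circ> L)" "inj (transvection i j c \<circ> L)"
    using assms by (simp_all add: linear3_comp linear3_transvection inj_compose inj_transvection)
  show "evenperm (proj_map M) = evenperm (proj_map L)"
    unfolding M_def using assms TL by (simp add: evenperm_comp_transvection evenperm_transvection_comp)
  show "linear3 M" "inj M"
    unfolding M_def using assms TL by (simp_all add: linear3_comp linear3_transvection inj_compose inj_transvection)
qed

lemma evenperm_lincomb3_block_pivot: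
  fixes a b1 b2 c1 c2 :: "'a::{field,finite}"
  assumes "CHAR('a) = 2" "a \<noteq> 0" "b1 \<noteq> 0" "inj (lincomb3 (a, 0, 0) (0, b1, b2) (0, c1, c2))"
  shows "evenperm (proj_map (lincomb3 (a, 0, 0) (0, b1, b2) (0, c1, c2)))"
proof -
  let ?L = "lincomb3 (a, 0, 0) (0, b1, b2) (0, c1, c2)"
  define d where "d = c2 - b2 * c1 / b1"
  let ?M = "transvection 2 1 (- (b2 / b1)) \<circ> ?L \<circ> transvection 1 2 (- (c1 / b1))"
  have M: "evenperm (proj_map ?M) = evenperm (proj_map ?L)" "inj ?M"
    using evenperm_transvection_sandwich[OF assms(1) _ _ _ _ _ _ linear3_lincomb3 assms(4),
        where i=2 and j=1 and i'=1 and j'=2 and c="- (b2 / b1)" and c'="- (c1 / b1)"]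
    by simp_all
  have eq: "?M = diag3 a b1 d"
    using assms(3) by (auto simp: fun_eq_iff transvection_def unit3_def comp3_def lincomb3_simp
        diag3_simp d_def field_simps)
  have "inj (diag3 a b1 d)"
    using M(2) unfolding eq .
  then have "d \<noteq> 0"
    using injD[of "diag3 a b1 d" "(0, 0, 1)" "(0, 0, 0)"] by (auto simp: diag3_simp)
  then show ?thesis
    using M(1) evenperm_diag3[OF assms(1-3)] unfolding eq by simp
qed

lemma evenperm_lincomb3_block:
  fixes a b1 b2 c1 c2 :: "'a::{field,finite}"
  assumes "CHAR('a) = 2" "a \<noteq> 0" and inj: "inj (lincomb3 (a, 0, 0) (0, b1, b2) (0, c1, c2))"
  shows "evenperm (proj_map (lincomb3 (a, 0, 0) (0, b1, b2) (0, c1, c2)))"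
proof (cases "b1 = 0")
  case True
  let ?L = "lincomb3 (a, 0, 0) (0, b1, b2) (0, c1, c2)" and ?T = "transvection 1 2 1"
  have "b2 \<noteq> 0"
    using True injD[OF inj, of "(0, 1, 0)" "(0, 0, 0)"] by (auto simp: lincomb3_simp)
  have eq: "?T \<circ> ?L = lincomb3 (a, 0, 0) (0, b1 + b2, b2) (0, c1 + c2, c2)"
    by (auto simp: fun_eq_iff transvection_def unit3_def comp3_def lincomb3_simp algebra_simps)
  have "inj (?T \<circ> ?L)"
    using assms(1) inj by (simp add: inj_compose inj_transvection)
  then have "evenperm (proj_map (?T \<circ> ?L))"
    unfolding eq using True \<open>b2 \<noteq> 0\<close> assms(1,2) by (intro evenperm_lincomb3_block_pivot) simp_all
  then show ?thesis
    using evenperm_transvection_comp[OF assms(1) _ _ _ linear3_lincomb3 inj] by simp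
qed (use evenperm_lincomb3_block_pivot assms in blast)

lemma evenperm_lincomb3_pivot:
  fixes a0 a1 a2 b0 b1 b2 c0 c1 c2 :: "'a::{field,finite}"
  assumes "CHAR('a) = 2" "a0 \<noteq> 0" "inj (lincomb3 (a0, a1, a2) (b0, b1, b2) (c0, c1, c2))"
  shows "evenperm (proj_map (lincomb3 (a0, a1, a2) (b0, b1, b2) (c0, c1, c2)))"
proof -
  let ?L = "lincomb3 (a0, a1, a2) (b0, b1, b2) (c0, c1, c2)"
  let ?M = "transvection 1 0 (- (a1 / a0)) \<circ> ?L \<circ> transvection 0 1 (- (b0 / a0))"
  let ?N = "transvection 2 0 (- (a2 / a0)) \<circ> ?M \<circ> transvection 0 2 (- (c0 / a0))"
  have M: "evenperm (proj_map ?M) = evenperm (proj_map ?L)" "linear3 ?M" "inj ?M"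
    using evenperm_transvection_sandwich[OF assms(1) _ _ _ _ _ _ linear3_lincomb3 assms(3),
        where i=1 and j=0 and i'=0 and j'=1 and c="- (a1 / a0)" and c'="- (b0 / a0)"]
    by simp_all
  have N: "evenperm (proj_map ?N) = evenperm (proj_map ?M)" "inj ?N"
    using evenperm_transvection_sandwich[OF assms(1) _ _ _ _ _ _ M(2,3),
        where i=2 and j=0 and i'=0 and j'=2 and c="- (a2 / a0)" and c'="- (c0 / a0)"]
    by simp_all
  have eq: "?N = lincomb3 (a0, 0, 0) (0, b1 - a1 * b0 / a0, b2 - a2 * b0 / a0)
      (0, c1 - a1 * c0 / a0, c2 - a2 * c0 / a0)"
    using assms(2) by (auto simp: fun_eq_iff transvection_def unit3_def comp3_def lincomb3_simp
        field_simps)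
  have "evenperm (proj_map ?N)"
    using N(2) evenperm_lincomb3_block[OF assms(1,2)] unfolding eq by simp
  then show ?thesis
    using M(1) N(1) by simp
qed

lemma evenperm_lincomb3:
  fixes a b c :: "'a::{field,finite} tri"
  assumes "CHAR('a) = 2" and inj: "inj (lincomb3 a b c)"
  shows "evenperm (proj_map (lincomb3 a b c))"
proof -
  obtain a0 a1 a2 where a: "a = (a0, a1, a2)"
    by (cases a)
  have "a \<noteq> (0, 0, 0)"
    using injD[OF inj, of "(1, 0, 0)" "(0, 0, 0)"] by (cases b; cases c) (auto simp: lincomb3_simp a)
  then have "a0 \<noteq> 0 \<or> (\<exists>l\<in>{1, 2}. a0 = 0 \<and> comp3 a l \<noteq> 0)"
    using a by (auto simp: comp3_def)
  then show ?thesis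
  proof
    assume "a0 \<noteq> 0"
    then show ?thesis
      using evenperm_lincomb3_pivot[OF assms(1)] inj a by (cases b; cases c) simp
  next
    assume "\<exists>l\<in>{1, 2}. a0 = 0 \<and> comp3 a l \<noteq> 0"
    then obtain l where "l \<in> {1, 2}" "a0 = 0" "comp3 a l \<noteq> 0"
      by blast
    then have l: "l < 3" "l \<noteq> 0" "a0 = 0" "comp3 a l \<noteq> 0"
      by auto
    let ?T = "transvection 0 l 1"
    have "inj (?T \<circ> lincomb3 a b c)"
      using assms(1) inj l(1,2) by (simp add: inj_compose inj_transvection)
    moreover have "comp3 (?T a) 0 \<noteq> 0"
      using l a by (auto simp: transvection_def unit3_def comp3_def)
    ultimately have "evenperm (proj_map (lincomb3 (?T a) (?T b) (?T c)))"
      using evenperm_lincomb3_pivot[OF assms(1)]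
      by (cases "?T a"; cases "?T b"; cases "?T c") (simp add: comp_lincomb3 linear3_transvection)
    then show ?thesis
      using evenperm_transvection_comp[OF assms(1) _ l(1) _ linear3_lincomb3 inj, of 0 1] l(2)
      by (simp add: comp_lincomb3 linear3_transvection)
  qed
qed

theorem evenperm_linear3:
  fixes L :: "'a::{field,finite} tri \<Rightarrow> 'a tri"
  assumes "CHAR('a) = 2" "linear3 L" "inj L"
  shows "evenperm (proj_map L)"
  using evenperm_lincomb3[OF assms(1)] assms(3) linear3_eq_lincomb3[OF assms(2)] by metis

section \<open>Frobenius and the base points\<close>

definition map3 :: "('a \<Rightarrow> 'b) \<Rightarrow> 'a tri \<Rightarrow> 'b tri" where
  "map3 f v = (case v of (x, y, z) \<Rightarrow> (f x, f y, f z))"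

lemma map3_simp [simp]: "map3 f (x, y, z) = (f x, f y, f z)"
  by (simp add: map3_def)

lemma power_eigenvector_rescale:
  fixes v :: "'k::alg_closed_field tri"
  assumes "n > 1" "v \<noteq> (0, 0, 0)" "map3 (\<lambda>x. x ^ n) v = smult3 l v"
  obtains \<mu> where "\<mu> \<noteq> 0" "map3 (\<lambda>x. x ^ n) (smult3 \<mu> v) = smult3 \<mu> v"
proof -
  have "map3 (\<lambda>x. x ^ n) v \<noteq> (0, 0, 0)"
    using assms(1,2) by (cases v) simp
  then have "l \<noteq> 0"
    using assms(3) by auto
  obtain \<mu> where \<mu>: "\<mu> ^ (n - 1) = inverse l"
    using nth_root_exists[of "n - 1" "inverse l"] assms(1) by auto
  have n: "n = Suc (n - 1)"
    using assms(1) by simp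
  have "\<mu> \<noteq> 0"
  proof
    assume "\<mu> = 0"
    then have "inverse l = 0"
      using \<mu> assms(1) by (simp add: power_0_left)
    then show False
      using \<open>l \<noteq> 0\<close> by simp
  qed
  have "\<mu> ^ n * l = \<mu>"
    using \<mu> \<open>l \<noteq> 0\<close> by (subst n) (simp add: mult.assoc)
  then have "map3 (\<lambda>x. x ^ n) (smult3 \<mu> v) = smult3 \<mu> v"
    using assms(3) by (cases v) (simp add: power_mult_distrib mult.assoc[symmetric])
  then show ?thesis
    using \<open>\<mu> \<noteq> 0\<close> that by blast
qed

locale qt_without_rational_base_points =
  fixes C :: "nat \<Rightarrow> nat \<Rightarrow> nat \<Rightarrow> 'a::{field,finite}" and m :: nat
    and A B :: "nat \<Rightarrow> nat \<Rightarrow> 'a alg_closure"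
  assumes m_pos: "m \<ge> 1" and card: "card (UNIV :: 'a set) = 2 ^ m"
    and det_A: "det3 A \<noteq> 0" and det_B: "det3 B \<noteq> 0"
    and factorization: "\<And>v. quadmap (lift_coeffs C) v = linmap A (stdquad (linmap B v))"
    and no_rational_zero: "\<And>v::'a tri. v \<noteq> (0, 0, 0) \<Longrightarrow> quadmap C v \<noteq> (0, 0, 0)"
begin

abbreviation q :: nat where "q \<equiv> 2 ^ m"

abbreviation Cbar :: "'a alg_closure tri \<Rightarrow> 'a alg_closure tri" where
  "Cbar \<equiv> quadmap (lift_coeffs C)"

lemma CHAR_2: "CHAR('a) = 2"
  using CHAR_eq_2_if_card[OF card m_pos] .

lemma q_ge_2: "q \<ge> 2"
  using power_increasing[OF m_pos, of "2::nat"] by simp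

definition frob :: "'a alg_closure \<Rightarrow> 'a alg_closure" where
  "frob x = x ^ q"

definition frob3 :: "'a alg_closure tri \<Rightarrow> 'a alg_closure tri" where
  "frob3 = map3 frob"

definition to_ac3 :: "'a tri \<Rightarrow> 'a alg_closure tri" where
  "to_ac3 = map3 to_ac"

lemma frob_add: "frob (x + y) = frob x + frob y"
  unfolding frob_def using CHAR_2 by (simp add: power_two_power_add)

lemma frob_mult: "frob (x * y) = frob x * frob y"
  unfolding frob_def by (simp add: power_mult_distrib)

lemma frob_0 [simp]: "frob 0 = 0" and frob_1 [simp]: "frob 1 = 1"
  unfolding frob_def by simp_all

lemma frob_inject: "frob x = frob y \<longleftrightarrow> x = y"
  unfolding frob_def using CHAR_2 power_two_power_inj[of x m y] by auto

lemma frob_eq_0_iff [simp]: "frob x = 0 \<longleftrightarrow> x = 0"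
  using frob_inject[of x 0] by simp

lemma frob_surj: "\<exists>y. frob y = x"
  unfolding frob_def using nth_root_exists[of q x] by auto

lemma frob_eq_self_iff: "frob x = x \<longleftrightarrow> x \<in> range to_ac"
  unfolding frob_def using power_card_eq_self_iff_in_range_to_ac[OF card] .

lemma frob_to_ac [simp]: "frob (to_ac a) = to_ac a"
  using frob_eq_self_iff by blast

lemma frob_inverse: "frob (inverse x) = inverse (frob x)"
  unfolding frob_def by (simp add: power_inverse)

lemma frob_frob_frob: "frob (frob (frob x)) = x ^ (q ^ 3)"
  unfolding frob_def by (simp add: power_mult[symmetric] power3_eq_cube)

lemma frob3_simp [simp]: "frob3 (x, y, z) = (frob x, frob y, frob z)"
  by (simp add: frob3_def)

lemma to_ac3_simp [simp]: "to_ac3 (x, y, z) = (to_ac x, to_ac y, to_ac z)"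
  by (simp add: to_ac3_def)

lemma frob3_add: "frob3 (u + w) = frob3 u + frob3 w"
  by (cases u; cases w) (simp add: frob_add)

lemma frob3_smult3: "frob3 (smult3 c v) = smult3 (frob c) (frob3 v)"
  by (cases v) (simp add: frob_mult)

lemma frob3_inject: "frob3 v = frob3 w \<longleftrightarrow> v = w"
  by (cases v; cases w) (simp add: frob_inject)

lemma frob3_eq_0_iff: "frob3 v = (0, 0, 0) \<longleftrightarrow> v = (0, 0, 0)"
  by (cases v) simp

lemma to_ac3_inject: "to_ac3 v = to_ac3 w \<longleftrightarrow> v = w"
  by (cases v; cases w) simp

lemma to_ac3_eq_0_iff: "to_ac3 v = (0, 0, 0) \<longleftrightarrow> v = (0, 0, 0)"
  by (cases v) simp

lemma to_ac3_add: "to_ac3 (u + w) = to_ac3 u + to_ac3 w"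
  by (cases u; cases w) simp

lemma to_ac3_smult3: "to_ac3 (smult3 c v) = smult3 (to_ac c) (to_ac3 v)"
  by (cases v) simp

lemma frob3_eq_self_iff: "frob3 v = v \<longleftrightarrow> v \<in> range to_ac3"
proof
  assume "frob3 v = v"
  then obtain x y z where v: "v = (x, y, z)" "frob x = x" "frob y = y" "frob z = z"
    by (cases v) auto
  then obtain a b c where "x = to_ac a" "y = to_ac b" "z = to_ac c"
    using frob_eq_self_iff by blast
  then have "v = to_ac3 (a, b, c)"
    using v by simp
  then show "v \<in> range to_ac3" by blast
qed auto

lemma bilmap_lift_coeffs:
  "bilmap (lift_coeffs C) (x, y, z) (x', y', z') = mk3 (\<lambda>k.
     to_ac (C k 0 0) * x * x' + to_ac (C k 0 1) * x * y' + to_ac (C k 0 2) * x * z' +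
    (to_ac (C k 1 0) * y * x' + to_ac (C k 1 1) * y * y' + to_ac (C k 1 2) * y * z') +
    (to_ac (C k 2 0) * z * x' + to_ac (C k 2 1) * z * y' + to_ac (C k 2 2) * z * z'))"
  by (simp add: bilmap_def sum_lessThan_3 lift_coeffs_def)

lemma frob3_bilmap: "frob3 (bilmap (lift_coeffs C) u w) = bilmap (lift_coeffs C) (frob3 u) (frob3 w)"
  by (cases u; cases w) (simp add: bilmap_lift_coeffs mk3_def frob_add frob_mult)

lemma frob3_polar: "frob3 (polar (lift_coeffs C) u w) = polar (lift_coeffs C) (frob3 u) (frob3 w)"
  by (simp add: polar_def frob3_add frob3_bilmap)

lemma frob3_Cbar: "frob3 (Cbar v) = Cbar (frob3 v)"
  by (simp add: quadmap_eq_bilmap frob3_bilmap)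

lemma comp3_to_ac3: "comp3 (to_ac3 v) i = to_ac (comp3 v i)"
  by (cases v) (simp add: comp3_def)

lemma Cbar_to_ac3: "Cbar (to_ac3 v) = to_ac3 (quadmap C v)"
  by (simp add: quadmap_def lift_coeffs_def mk3_def comp3_to_ac3 to_ac_sum)

lemma Cbar_frob3_fixed_nonzero:
  assumes "v \<noteq> (0, 0, 0)" "frob3 v = v"
  shows "Cbar v \<noteq> (0, 0, 0)"
proof -
  obtain w where w: "v = to_ac3 w"
    using assms(2) frob3_eq_self_iff by blast
  then have "w \<noteq> (0, 0, 0)"
    using assms(1) by (cases w) simp
  then have "to_ac3 (quadmap C w) \<noteq> (0, 0, 0)"
    using no_rational_zero to_ac3_eq_0_iff by blast
  then show ?thesis
    unfolding w Cbar_to_ac3 .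
qed

text \<open>\<open>base_point j v\<close>: \<open>v\<close> represents the base point \<open>B\<^sup>-\<^sup>1 e\<^sub>j\<close> of \<open>C\<close>.\<close>

definition base_point :: "nat \<Rightarrow> 'a alg_closure tri \<Rightarrow> bool" where
  "base_point j v \<longleftrightarrow> j < 3 \<and> (\<exists>a. a \<noteq> 0 \<and> linmap B v = smult3 a (unit3 j))"

lemma Cbar_eq_0_iff: "Cbar v = (0, 0, 0) \<longleftrightarrow> stdquad (linmap B v) = (0, 0, 0)"
  using factorization[of v] linmap_eq_0_iff[OF det_A] by simp

lemma base_point_nonzero:
  assumes "base_point j v"
  shows "v \<noteq> (0, 0, 0)"
proof -
  obtain a where "a \<noteq> 0" "linmap B v = smult3 a (unit3 j)"
    using assms by (auto simp: base_point_def)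
  then have "linmap B v \<noteq> (0, 0, 0)"
    by (simp add: smult3_eq_0_iff unit3_def)
  then show ?thesis
    using linmap_zero by auto
qed

lemma Cbar_base_point: "base_point j v \<Longrightarrow> Cbar v = (0, 0, 0)"
  by (auto simp: base_point_def Cbar_eq_0_iff unit3_def stdquad_def)

lemma base_point_if_Cbar_eq_0:
  assumes "v \<noteq> (0, 0, 0)" "Cbar v = (0, 0, 0)"
  shows "\<exists>j. base_point j v"
proof -
  obtain x y z where xyz: "linmap B v = (x, y, z)"
    by (cases "linmap B v")
  then have "(x, y, z) \<noteq> (0, 0, 0)"
    using assms(1) linmap_eq_0_iff[OF det_B, of v] by simp
  moreover have "y * z = 0" "x * z = 0" "x * y = 0"
    using assms(2) xyz by (simp_all add: Cbar_eq_0_iff stdquad_def)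
  ultimately have "base_point 0 v \<or> base_point 1 v \<or> base_point 2 v"
    using xyz by (auto simp: base_point_def unit3_def)
  then show ?thesis by blast
qed

lemma base_point_exists: "j < 3 \<Longrightarrow> \<exists>v. base_point j v"
  using linmap_linmap_adj3[of B "unit3 j"] det_B unfolding base_point_def by blast

lemma base_point_smult3:
  assumes "base_point j v" "c \<noteq> 0"
  shows "base_point j (smult3 c v)"
proof -
  obtain a where "j < 3" "a \<noteq> 0" "linmap B v = smult3 a (unit3 j)"
    using assms(1) by (auto simp: base_point_def)
  then show ?thesis
    using assms(2) unfolding base_point_def by (intro conjI exI[of _ "c * a"]) (simp_all add: linmap_smult3)
qed

lemma base_point_unique: "base_point i v \<Longrightarrow> base_point j v \<Longrightarrow> i = j"
  unfolding base_point_def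
  by (auto simp: unit3_def smult3_eq_0_iff split: if_splits)

lemma base_point_proj_pt_eq:
  assumes "base_point j v" "base_point j w"
  shows "proj_pt v = proj_pt w"
proof -
  obtain a b where "a \<noteq> 0" "linmap B v = smult3 a (unit3 j)" "b \<noteq> 0" "linmap B w = smult3 b (unit3 j)"
    using assms unfolding base_point_def by blast
  then have "linmap B v = linmap B (smult3 (a / b) w)"
    by (simp add: linmap_smult3)
  then have "v = smult3 (a / b) w"
    using inj_linmap[OF det_B] by (simp add: inj_eq)
  then show ?thesis
    using \<open>a \<noteq> 0\<close> \<open>b \<noteq> 0\<close> by (simp add: proj_pt_smult3)
qed

lemma base_point_iff_proj_pt_eq:
  assumes "base_point j v"
  shows "base_point j w \<longleftrightarrow> proj_pt w = proj_pt v"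
proof
  assume "proj_pt w = proj_pt v"
  then obtain c where "c \<noteq> 0" "w = smult3 c v"
    by (auto simp: proj_pt_eq_iff)
  then show "base_point j w"
    using assms by (simp add: base_point_smult3)
qed (use assms base_point_proj_pt_eq in blast)

lemma proj_pt_frob3_eq_iff: "proj_pt (frob3 v) = proj_pt (frob3 w) \<longleftrightarrow> proj_pt v = proj_pt w"
proof
  assume "proj_pt (frob3 v) = proj_pt (frob3 w)"
  then obtain c where c: "c \<noteq> 0" "frob3 v = smult3 c (frob3 w)"
    by (auto simp: proj_pt_eq_iff)
  obtain d where d: "frob d = c"
    using frob_surj by blast
  then have "frob3 v = frob3 (smult3 d w)"
    using c(2) by (simp add: frob3_smult3)
  then have "v = smult3 d w"
    by (simp add: frob3_inject)
  moreover have "d \<noteq> 0"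
    using c(1) d by auto
  ultimately show "proj_pt v = proj_pt w"
    by (simp add: proj_pt_smult3)
next
  assume "proj_pt v = proj_pt w"
  then obtain c where "c \<noteq> 0" "v = smult3 c w"
    by (auto simp: proj_pt_eq_iff)
  then show "proj_pt (frob3 v) = proj_pt (frob3 w)"
    by (simp add: frob3_smult3 proj_pt_smult3)
qed

lemma base_point_frob3:
  assumes "base_point j v"
  shows "\<exists>j'. base_point j' (frob3 v)"
proof (rule base_point_if_Cbar_eq_0)
  show "frob3 v \<noteq> (0, 0, 0)"
    using base_point_nonzero[OF assms] by (simp add: frob3_eq_0_iff)
  show "Cbar (frob3 v) = (0, 0, 0)"
    using Cbar_base_point[OF assms] by (simp flip: frob3_Cbar)
qed

text \<open>A representative \<open>v\<close> with \<open>frob3 v\<close> proportional to \<open>v\<close> can be rescaled to a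
  Frobenius-fixed, i.e. rational, vector, but \<open>C\<close> has no rational zeros.\<close>

lemma base_point_frob3_ne: "base_point j v \<Longrightarrow> \<not> base_point j (frob3 v)"
proof
  assume bp: "base_point j v" "base_point j (frob3 v)"
  then have "proj_pt (frob3 v) = proj_pt v"
    by (rule base_point_proj_pt_eq[rotated])
  then obtain l where "frob3 v = smult3 l v"
    by (auto simp: proj_pt_eq_iff)
  then have "map3 (\<lambda>x. x ^ q) v = smult3 l v"
    by (simp add: frob3_def frob_def[abs_def])
  then obtain \<mu> where \<mu>: "\<mu> \<noteq> 0" "frob3 (smult3 \<mu> v) = smult3 \<mu> v"
    using power_eigenvector_rescale[of q v l] q_ge_2 base_point_nonzero[OF bp(1)]
    by (auto simp: frob3_def frob_def[abs_def])
  have "Cbar (smult3 \<mu> v) \<noteq> (0, 0, 0)"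
    using \<mu> base_point_nonzero[OF bp(1)] by (intro Cbar_frob3_fixed_nonzero) (simp_all add: smult3_eq_0_iff)
  then show False
    using Cbar_base_point[OF bp(1)] by (simp add: quadmap_smult3)
qed

definition frob_perm :: "nat \<Rightarrow> nat" where
  "frob_perm j = (THE j'. \<exists>v. base_point j v \<and> base_point j' (frob3 v))"

lemma base_point_frob_perm:
  assumes "base_point j v"
  shows "base_point (frob_perm j) (frob3 v)"
proof -
  obtain j' where j': "base_point j' (frob3 v)"
    using base_point_frob3[OF assms] by blast
  have "(THE j'. \<exists>v. base_point j v \<and> base_point j' (frob3 v)) = j'"
  proof (rule the_equality)
    show "\<exists>u. base_point j u \<and> base_point j' (frob3 u)"
      using assms j' by blast
  next
    fix i assume "\<exists>u. base_point j u \<and> base_point i (frob3 u)"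
    then obtain u where u: "base_point j u" "base_point i (frob3 u)"
      by blast
    have "proj_pt (frob3 u) = proj_pt (frob3 v)"
      using base_point_proj_pt_eq[OF u(1) assms] by (simp add: proj_pt_frob3_eq_iff)
    then have "base_point j' (frob3 u)"
      using base_point_iff_proj_pt_eq[OF j'] by blast
    then show "i = j'"
      using base_point_unique u(2) by blast
  qed
  then show ?thesis
    using j' by (simp add: frob_perm_def)
qed

lemma frob_perm_less:
  assumes "j < 3"
  shows "frob_perm j < 3"
proof -
  obtain v where "base_point j v"
    using base_point_exists[OF assms] ..
  then have "base_point (frob_perm j) (frob3 v)"
    by (rule base_point_frob_perm)
  then show ?thesis
    by (simp add: base_point_def)
qed

lemma frob_perm_neq: "j < 3 \<Longrightarrow> frob_perm j \<noteq> j"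
  using base_point_exists base_point_frob_perm base_point_frob3_ne by fastforce

lemma inj_on_frob_perm: "inj_on frob_perm {..<3}"
proof (rule inj_onI)
  fix i j assume "i \<in> {..<3}" "j \<in> {..<3}" "frob_perm i = frob_perm j"
  moreover obtain u v where u: "base_point i u" and v: "base_point j v"
    using base_point_exists \<open>i \<in> {..<3}\<close> \<open>j \<in> {..<3}\<close> by blast
  ultimately have "base_point (frob_perm i) (frob3 u)" "base_point (frob_perm i) (frob3 v)"
    using base_point_frob_perm[OF u] base_point_frob_perm[OF v] by simp_all
  then have "proj_pt (frob3 u) = proj_pt (frob3 v)"
    by (rule base_point_proj_pt_eq)
  then have "proj_pt u = proj_pt v"
    by (simp add: proj_pt_frob3_eq_iff)
  then have "base_point j u"
    using base_point_iff_proj_pt_eq[OF v] by blast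
  then show "i = j"
    using base_point_unique u by blast
qed

text \<open>A fixed-point-free permutation of the three base points is a 3-cycle; rescaling as
  above then gives a representative with \<open>frob3 (frob3 (frob3 b)) = b\<close>.\<close>

lemma frob3_base_point_orbit:
  obtains b i j k where "frob3 (frob3 (frob3 b)) = b" "base_point i b" "base_point j (frob3 b)"
    "base_point k (frob3 (frob3 b))" "distinct [i, j, k]"
proof -
  have perm: "\<forall>i<3. frob_perm i < 3 \<and> frob_perm i \<noteq> i"
    using frob_perm_less frob_perm_neq by blast
  note cyc = derangement3_is_cycle[OF perm inj_on_frob_perm]
  have "\<exists>v. base_point 0 v"
    by (rule base_point_exists) simp
  then obtain b0 where b0: "base_point 0 b0" ..
  have "base_point (frob_perm (frob_perm (frob_perm 0))) (frob3 (frob3 (frob3 b0)))"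
    using b0 by (intro base_point_frob_perm)
  then have "base_point 0 (frob3 (frob3 (frob3 b0)))"
    unfolding cyc(1) .
  then have "proj_pt (frob3 (frob3 (frob3 b0))) = proj_pt b0"
    using b0 by (rule base_point_proj_pt_eq)
  then obtain l where "frob3 (frob3 (frob3 b0)) = smult3 l b0"
    by (auto simp: proj_pt_eq_iff)
  then have "map3 (\<lambda>x. x ^ (q ^ 3)) b0 = smult3 l b0"
    by (cases b0) (simp add: frob_frob_frob)
  moreover have "q ^ 3 > 1"
    using m_pos by (intro one_less_power) auto
  ultimately obtain \<mu> where \<mu>: "\<mu> \<noteq> 0" "map3 (\<lambda>x. x ^ (q ^ 3)) (smult3 \<mu> b0) = smult3 \<mu> b0"
    using power_eigenvector_rescale base_point_nonzero[OF b0] by blast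
  define b where "b = smult3 \<mu> b0"
  have "frob3 (frob3 (frob3 b)) = b"
    using \<mu>(2) by (cases b) (simp add: b_def frob_frob_frob)
  moreover have "base_point 0 b" "base_point (frob_perm 0) (frob3 b)"
    "base_point (frob_perm (frob_perm 0)) (frob3 (frob3 b))"
    using b0 \<mu>(1) by (simp_all add: b_def frob3_smult3 base_point_smult3 base_point_frob_perm)
  ultimately show ?thesis
    using that cyc(2) by simp
qed

end

section \<open>The quadratic map in cubic coordinates\<close>

text \<open>The matrix \<open>G\<close> with columns \<open>b\<close>, \<open>frob3 b\<close>, \<open>frob3 (frob3 b)\<close> identifies the field
  \<open>Fq3\<close> with \<open>q\<^sup>3\<close> elements with \<open>\<bbbF>\<^sub>q\<^sup>3\<close> via \<open>Phi t = G (t, t\<^sup>q, t\<^sup>q\<^sup>2)\<close>; in these coordinates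
  \<open>C\<close> becomes \<open>t \<mapsto> N(t) \<Psi>(1/t)\<close> with \<open>\<Psi>\<close> linear.\<close>

locale qt_base_point_orbit = qt_without_rational_base_points +
  fixes b :: "'a alg_closure tri" and i j k :: nat
  assumes frob3_orbit: "frob3 (frob3 (frob3 b)) = b"
    and base_points: "base_point i b" "base_point j (frob3 b)" "base_point k (frob3 (frob3 b))"
    and distinct_ijk: "distinct [i, j, k]"
begin

definition G :: "'a alg_closure tri \<Rightarrow> 'a alg_closure tri" where
  "G = lincomb3 b (frob3 b) (frob3 (frob3 b))"

lemma linmap_B_G:
  obtains \<alpha> \<beta> \<gamma> where "\<alpha> \<noteq> 0" "\<beta> \<noteq> 0" "\<gamma> \<noteq> 0"
    "\<And>x0 x1 x2. linmap B (G (x0, x1, x2)) =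
       smult3 (x0 * \<alpha>) (unit3 i) + smult3 (x1 * \<beta>) (unit3 j) + smult3 (x2 * \<gamma>) (unit3 k)"
proof -
  obtain \<alpha> \<beta> \<gamma> where "\<alpha> \<noteq> 0" "linmap B b = smult3 \<alpha> (unit3 i)" "\<beta> \<noteq> 0"
    "linmap B (frob3 b) = smult3 \<beta> (unit3 j)" "\<gamma> \<noteq> 0" "linmap B (frob3 (frob3 b)) = smult3 \<gamma> (unit3 k)"
    using base_points unfolding base_point_def by blast
  then show ?thesis
    using that by (simp add: G_def lincomb3_def linmap_add linmap_smult3)
qed

lemma G_inject: "G x = G y \<longleftrightarrow> x = y"
proof
  assume "G x = G y"
  obtain \<alpha> \<beta> \<gamma> where abc: "\<alpha> \<noteq> 0" "\<beta> \<noteq> 0" "\<gamma> \<noteq> 0"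
    and BG: "\<And>x0 x1 x2. linmap B (G (x0, x1, x2)) =
       smult3 (x0 * \<alpha>) (unit3 i) + smult3 (x1 * \<beta>) (unit3 j) + smult3 (x2 * \<gamma>) (unit3 k)"
    using linmap_B_G by blast
  have ijk: "i < 3" "j < 3" "k < 3"
    using base_points by (simp_all add: base_point_def)
  obtain x0 x1 x2 y0 y1 y2 where xy: "x = (x0, x1, x2)" "y = (y0, y1, y2)"
    by (cases x; cases y)
  have "comp3 (linmap B (G x)) l = comp3 (linmap B (G y)) l" for l
    using \<open>G x = G y\<close> by simp
  from this[of i] this[of j] this[of k] show "x = y"
    using abc ijk distinct_ijk by (simp add: xy BG comp3_add comp3_smult3 comp3_unit3)
qed simp

lemma G_surj: "\<exists>x. G x = v"
proof -
  obtain \<alpha> \<beta> \<gamma> where abc: "\<alpha> \<noteq> 0" "\<beta> \<noteq> 0" "\<gamma> \<noteq> 0"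
    and BG: "\<And>x0 x1 x2. linmap B (G (x0, x1, x2)) =
       smult3 (x0 * \<alpha>) (unit3 i) + smult3 (x1 * \<beta>) (unit3 j) + smult3 (x2 * \<gamma>) (unit3 k)"
    using linmap_B_G by blast
  have ijk: "i < 3" "j < 3" "k < 3"
    using base_points by (simp_all add: base_point_def)
  let ?w = "linmap B v"
  have "linmap B (G (comp3 ?w i / \<alpha>, comp3 ?w j / \<beta>, comp3 ?w k / \<gamma>)) = linmap B v"
    using abc unit3_expansion[OF distinct_ijk ijk, of ?w] by (simp add: BG)
  then show ?thesis
    using inj_linmap[OF det_B] by (auto dest: injD)
qed

lemma frob3_G: "frob3 (G (x0, x1, x2)) = G (frob x2, frob x0, frob x1)"
  by (simp add: G_def lincomb3_def frob3_add frob3_smult3 frob3_orbit algebra_simps)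

definition D0 where "D0 = polar (lift_coeffs C) (frob3 b) (frob3 (frob3 b))"
definition D1 where "D1 = polar (lift_coeffs C) b (frob3 (frob3 b))"
definition D2 where "D2 = polar (lift_coeffs C) b (frob3 b)"

lemma Cbar_G: "Cbar (G (x0, x1, x2)) = smult3 (x1 * x2) D0 + smult3 (x0 * x2) D1 + smult3 (x0 * x1) D2"
  unfolding G_def D0_def D1_def D2_def
  by (rule quadmap_lincomb3) (use base_points in \<open>simp_all add: Cbar_base_point\<close>)

lemma frob3_D: "frob3 D0 = D1" "frob3 D1 = D2" "frob3 D2 = D0"
  by (simp_all add: D0_def D1_def D2_def frob3_polar frob3_orbit polar_commute)

definition Fq3 :: "'a alg_closure set" where
  "Fq3 = {t. frob (frob (frob t)) = t}"

lemma Fq3_closed: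
  "t \<in> Fq3 \<Longrightarrow> frob t \<in> Fq3" "t \<in> Fq3 \<Longrightarrow> inverse t \<in> Fq3"
  "t \<in> Fq3 \<Longrightarrow> t' \<in> Fq3 \<Longrightarrow> t + t' \<in> Fq3" "t \<in> Fq3 \<Longrightarrow> t' \<in> Fq3 \<Longrightarrow> t * t' \<in> Fq3"
  "to_ac c \<in> Fq3"
  by (simp_all add: Fq3_def frob_inverse frob_add frob_mult)

definition norm3 :: "'a alg_closure \<Rightarrow> 'a alg_closure" where
  "norm3 t = t * frob t * frob (frob t)"

definition Phi :: "'a alg_closure \<Rightarrow> 'a alg_closure tri" where
  "Phi t = G (t, frob t, frob (frob t))"

definition Psi :: "'a alg_closure \<Rightarrow> 'a alg_closure tri" where
  "Psi s = smult3 s D0 + smult3 (frob s) D1 + smult3 (frob (frob s)) D2"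

lemma frob_norm3: "t \<in> Fq3 \<Longrightarrow> frob (norm3 t) = norm3 t"
  by (simp add: Fq3_def norm3_def frob_mult mult_ac)

lemma frob3_Phi: "t \<in> Fq3 \<Longrightarrow> frob3 (Phi t) = Phi t"
  by (simp add: Fq3_def Phi_def frob3_G)

lemma frob3_Psi: "s \<in> Fq3 \<Longrightarrow> frob3 (Psi s) = Psi s"
  by (simp add: Fq3_def Psi_def frob3_add frob3_smult3 frob3_D algebra_simps)

lemma Phi_inject: "Phi t = Phi t' \<longleftrightarrow> t = t'"
  by (auto simp: Phi_def G_inject)

lemma Phi_onto: "frob3 v = v \<Longrightarrow> \<exists>t\<in>Fq3. Phi t = v"
proof -
  assume v: "frob3 v = v"
  obtain x0 x1 x2 where x: "G (x0, x1, x2) = v"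
    using G_surj by (metis prod_cases3)
  then have "G (frob x2, frob x0, frob x1) = G (x0, x1, x2)"
    using v by (simp flip: frob3_G)
  then have "frob x2 = x0" "frob x0 = x1" "frob x1 = x2"
    by (simp_all add: G_inject)
  then have "x0 \<in> Fq3" "Phi x0 = v"
    using x by (simp_all add: Fq3_def Phi_def)
  then show ?thesis
    by blast
qed

lemma Phi_add: "Phi (t + t') = Phi t + Phi t'"
  by (simp add: Phi_def G_def frob_add flip: lincomb3_add)

lemma Phi_smult: "frob c = c \<Longrightarrow> Phi (c * t) = smult3 c (Phi t)"
  by (simp add: Phi_def G_def frob_mult flip: lincomb3_smult3)

lemma Phi_eq_0_iff: "Phi t = (0, 0, 0) \<longleftrightarrow> t = 0"
  using Phi_smult[of 0 0] Phi_inject[of t 0] by simp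

lemma Psi_add: "Psi (s + s') = Psi s + Psi s'"
  by (simp add: Psi_def frob_add smult3_add_left algebra_simps)

lemma Psi_smult: "frob c = c \<Longrightarrow> Psi (c * s) = smult3 c (Psi s)"
  by (simp add: Psi_def frob_mult smult3_add)

text \<open>Since \<open>C\<close> vanishes at the columns of \<open>G\<close>, only the mixed terms survive, and
  \<open>t\<^sup>q t\<^sup>q\<^sup>2 = N(t) / t\<close>.\<close>

lemma Cbar_Phi:
  assumes "t \<in> Fq3" "t \<noteq> 0"
  shows "Cbar (Phi t) = smult3 (norm3 t) (Psi (inverse t))"
proof -
  have "frob (frob t * frob (frob t)) = t * frob (frob t)"
    "frob (frob (frob t * frob (frob t))) = t * frob t"
    using assms(1) by (simp_all add: Fq3_def frob_mult mult.commute)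
  then have "Cbar (Phi t) = Psi (frob t * frob (frob t))"
    by (simp add: Phi_def Cbar_G Psi_def)
  also have "frob t * frob (frob t) = norm3 t * inverse t"
    using assms(2) by (simp add: norm3_def field_simps)
  finally show ?thesis
    using Psi_smult[OF frob_norm3[OF assms(1)]] by simp
qed

definition of_ac3 :: "'a alg_closure tri \<Rightarrow> 'a tri" where
  "of_ac3 = map3 of_ac"

definition phi :: "'a alg_closure \<Rightarrow> 'a tri" where
  "phi t = of_ac3 (Phi t)"

definition psi :: "'a alg_closure \<Rightarrow> 'a tri" where
  "psi s = of_ac3 (Psi s)"

lemma to_ac3_of_ac3:
  assumes "frob3 v = v"
  shows "to_ac3 (of_ac3 v) = v"
proof -
  obtain w where "v = to_ac3 w"
    using assms frob3_eq_self_iff by blast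
  then show ?thesis
    by (cases w) (simp add: of_ac3_def)
qed

lemma to_ac3_phi: "t \<in> Fq3 \<Longrightarrow> to_ac3 (phi t) = Phi t"
  by (simp add: phi_def frob3_Phi to_ac3_of_ac3)

lemma to_ac3_psi: "s \<in> Fq3 \<Longrightarrow> to_ac3 (psi s) = Psi s"
  by (simp add: psi_def frob3_Psi to_ac3_of_ac3)

lemma phi_inject: "t \<in> Fq3 \<Longrightarrow> t' \<in> Fq3 \<Longrightarrow> phi t = phi t' \<longleftrightarrow> t = t'"
  by (metis to_ac3_phi Phi_inject)

lemma bij_betw_phi: "bij_betw phi Fq3 UNIV"
proof (rule bij_betwI')
  show "phi t = phi t' \<longleftrightarrow> t = t'" if "t \<in> Fq3" "t' \<in> Fq3" for t t'
    using that by (rule phi_inject)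
  show "\<exists>t\<in>Fq3. v = phi t" for v
  proof -
    obtain t where t: "t \<in> Fq3" "Phi t = to_ac3 v"
      using Phi_onto[of "to_ac3 v"] by (cases v) auto
    then have "to_ac3 (phi t) = to_ac3 v"
      by (simp add: to_ac3_phi)
    then show ?thesis
      using t(1) by (auto simp: to_ac3_inject)
  qed
qed simp

lemma phi_add: "t \<in> Fq3 \<Longrightarrow> t' \<in> Fq3 \<Longrightarrow> phi (t + t') = phi t + phi t'"
  by (simp add: to_ac3_inject[symmetric] to_ac3_add to_ac3_phi Fq3_closed Phi_add)

lemma phi_smult: "t \<in> Fq3 \<Longrightarrow> phi (to_ac c * t) = smult3 c (phi t)"
  by (simp add: to_ac3_inject[symmetric] to_ac3_smult3 to_ac3_phi Fq3_closed Phi_smult)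

lemma phi_eq_0_iff: "t \<in> Fq3 \<Longrightarrow> phi t = (0, 0, 0) \<longleftrightarrow> t = 0"
  by (metis to_ac3_phi Phi_eq_0_iff to_ac3_eq_0_iff)

lemma psi_add: "s \<in> Fq3 \<Longrightarrow> s' \<in> Fq3 \<Longrightarrow> psi (s + s') = psi s + psi s'"
  by (simp add: to_ac3_inject[symmetric] to_ac3_add to_ac3_psi Fq3_closed Psi_add)

lemma psi_smult: "s \<in> Fq3 \<Longrightarrow> psi (to_ac c * s) = smult3 c (psi s)"
  by (simp add: to_ac3_inject[symmetric] to_ac3_smult3 to_ac3_psi Fq3_closed Psi_smult)

lemma of_ac_norm3:
  assumes "t \<in> Fq3" "t \<noteq> 0"
  shows "to_ac (of_ac (norm3 t)) = norm3 t" "of_ac (norm3 t) \<noteq> 0"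
proof -
  show *: "to_ac (of_ac (norm3 t)) = norm3 t"
    using frob_norm3[OF assms(1)] frob_eq_self_iff to_ac_of_ac by blast
  show "of_ac (norm3 t) \<noteq> 0"
    using assms(2) * by (metis frob_eq_0_iff norm3_def no_zero_divisors to_ac_0)
qed

lemma quadmap_phi:
  assumes "t \<in> Fq3" "t \<noteq> 0"
  shows "quadmap C (phi t) = smult3 (of_ac (norm3 t)) (psi (inverse t))"
proof -
  have "to_ac3 (quadmap C (phi t)) = smult3 (norm3 t) (Psi (inverse t))"
    using assms by (simp add: Cbar_to_ac3[symmetric] to_ac3_phi Cbar_Phi)
  also have "\<dots> = to_ac3 (smult3 (of_ac (norm3 t)) (psi (inverse t)))"
    using assms by (simp add: to_ac3_smult3 of_ac_norm3 to_ac3_psi Fq3_closed)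
  finally show ?thesis
    by (simp add: to_ac3_inject)
qed

text \<open>A nonzero \<open>d\<close> with \<open>psi d = 0\<close> would make \<open>phi (1/d)\<close> a rational zero of \<open>C\<close>.\<close>

lemma psi_inject:
  assumes "s \<in> Fq3" "s' \<in> Fq3" "psi s = psi s'"
  shows "s = s'"
proof (rule ccontr)
  assume "s \<noteq> s'"
  define d where "d = s + s'"
  have "d \<in> Fq3"
    using assms(1,2) by (simp add: d_def Fq3_closed)
  have "d \<noteq> 0"
  proof
    assume "d = 0"
    then have "s = - s'"
      by (simp add: d_def eq_neg_iff_add_eq_0)
    then show False
      using \<open>s \<noteq> s'\<close> CHAR_2 by (simp add: uminus_CHAR_2)
  qed
  have "psi d = (0, 0, 0)"
    using assms CHAR_2 by (simp add: d_def psi_add add_self_tri zero_tri)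
  then have "quadmap C (phi (inverse d)) = (0, 0, 0)"
    using \<open>d \<in> Fq3\<close> \<open>d \<noteq> 0\<close> by (simp add: quadmap_phi Fq3_closed)
  moreover have "phi (inverse d) \<noteq> (0, 0, 0)"
    using \<open>d \<in> Fq3\<close> \<open>d \<noteq> 0\<close> by (simp add: phi_eq_0_iff Fq3_closed)
  ultimately show False
    using no_rational_zero by blast
qed

definition phi_inv :: "'a tri \<Rightarrow> 'a alg_closure" where
  "phi_inv = the_inv_into Fq3 phi"

lemma phi_inv_in_Fq3: "phi_inv v \<in> Fq3"
  using bij_betw_phi by (simp add: phi_inv_def bij_betw_def the_inv_into_into)

lemma phi_phi_inv [simp]: "phi (phi_inv v) = v"
  using bij_betw_phi by (simp add: phi_inv_def f_the_inv_into_f_bij_betw)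

lemma phi_inv_phi [simp]: "t \<in> Fq3 \<Longrightarrow> phi_inv (phi t) = t"
  using phi_inject phi_inv_in_Fq3 phi_phi_inv by blast

lemma phi_inv_add: "phi_inv (u + w) = phi_inv u + phi_inv w"
  by (metis phi_add phi_phi_inv phi_inv_phi phi_inv_in_Fq3 Fq3_closed(3))

lemma phi_inv_smult3: "phi_inv (smult3 c u) = to_ac c * phi_inv u"
  by (metis phi_smult phi_phi_inv phi_inv_phi phi_inv_in_Fq3 Fq3_closed(4,5))

lemma phi_inv_eq_0_iff: "phi_inv v = 0 \<longleftrightarrow> v = (0, 0, 0)"
  by (metis phi_eq_0_iff phi_phi_inv phi_inv_in_Fq3)

text \<open>On \<open>P\<^sup>2(\<bbbF>\<^sub>q) = P(Fq3)\<close> the map \<open>C\<close> is the inversion \<open>Inv\<close> followed by the linear map \<open>Lin\<close>.\<close>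

definition Lin :: "'a tri \<Rightarrow> 'a tri" where
  "Lin v = psi (phi_inv v)"

definition Inv :: "'a tri \<Rightarrow> 'a tri" where
  "Inv v = phi (inverse (phi_inv v))"

lemma linear3_Lin: "linear3 Lin"
  by (simp add: linear3_def Lin_def phi_inv_add phi_inv_smult3 psi_add psi_smult phi_inv_in_Fq3)

lemma inj_Lin: "inj Lin"
  by (rule injI) (metis Lin_def psi_inject phi_inv_in_Fq3 phi_phi_inv)

lemma Inv_smult3: "c \<noteq> 0 \<Longrightarrow> Inv (smult3 c v) = smult3 (inverse c) (Inv v)"
  by (simp add: Inv_def phi_inv_smult3 phi_smult[symmetric] Fq3_closed phi_inv_in_Fq3)

lemma Inv_Inv [simp]: "Inv (Inv v) = v"
  by (simp add: Inv_def Fq3_closed phi_inv_in_Fq3)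

lemma Inv_nonzero: "v \<noteq> (0, 0, 0) \<Longrightarrow> Inv v \<noteq> (0, 0, 0)"
  by (simp add: Inv_def phi_eq_0_iff Fq3_closed phi_inv_in_Fq3 phi_inv_eq_0_iff)

lemma proj_compatible_Inv: "proj_compatible Inv"
  unfolding proj_compatible_def
proof (intro conjI allI impI)
  show "Inv v \<noteq> (0, 0, 0)" if "v \<noteq> (0, 0, 0)" for v
    using that by (rule Inv_nonzero)
  show "\<exists>d. d \<noteq> 0 \<and> Inv (smult3 c v) = smult3 d (Inv v)" if "c \<noteq> 0" for c v
    using that Inv_smult3 by (intro exI[of _ "inverse c"]) simp
qed

lemma quadmap_eq_Lin_Inv:
  assumes "v \<noteq> (0, 0, 0)"
  shows "\<exists>c. c \<noteq> 0 \<and> quadmap C v = smult3 c (Lin (Inv v))"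
proof -
  let ?t = "phi_inv v"
  have "?t \<in> Fq3" "?t \<noteq> 0"
    using assms by (simp_all add: phi_inv_in_Fq3 phi_inv_eq_0_iff)
  then have "quadmap C v = smult3 (of_ac (norm3 ?t)) (Lin (Inv v))"
    using quadmap_phi[of ?t] by (simp add: Lin_def Inv_def Fq3_closed)
  then show ?thesis
    using of_ac_norm3 \<open>?t \<in> Fq3\<close> \<open>?t \<noteq> 0\<close> by blast
qed

lemma induced_map_eq: "induced_map C = proj_map Lin \<circ> proj_map Inv"
proof -
  have "proj_map (quadmap C) = proj_map (Lin \<circ> Inv)"
    by (rule proj_map_cong) (simp add: quadmap_eq_Lin_Inv)
  then show ?thesis
    using proj_map_comp proj_compatible_linear3[OF linear3_Lin inj_Lin] proj_compatible_Inv
    by (simp add: induced_map_eq_proj_map)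
qed

lemma proj_map_Inv_involution: "proj_map Inv \<circ> proj_map Inv = id"
proof -
  have "Inv \<circ> Inv = (\<lambda>v. v)"
    by (simp add: fun_eq_iff)
  then show ?thesis
    by (metis proj_map_comp proj_compatible_Inv proj_map_id)
qed

lemma proj_map_Inv_permutes: "proj_map Inv permutes P2"
proof (rule proj_map_permutes[OF proj_compatible_Inv])
  fix v w :: "'a tri" assume "proj_pt (Inv v) = proj_pt (Inv w)"
  then obtain c where "c \<noteq> 0" "Inv v = smult3 c (Inv w)"
    by (auto simp: proj_pt_eq_iff)
  then have "v = smult3 (inverse c) w"
    by (metis Inv_Inv Inv_smult3)
  then show "proj_pt v = proj_pt w"
    using \<open>c \<noteq> 0\<close> by (simp add: proj_pt_smult3)
qed

lemma one_in_Fq3: "1 \<in> Fq3"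
  by (simp add: Fq3_def)

text \<open>\<open>[t]\<close> is fixed iff \<open>t\<^sup>2\<close> lies in \<open>\<bbbF>\<^sub>q\<close>; squaring is bijective in characteristic 2,
  so the only fixed point is \<open>[1]\<close>.\<close>

lemma proj_pt_Inv_eq_iff:
  assumes "v \<noteq> (0, 0, 0)"
  shows "proj_pt (Inv v) = proj_pt v \<longleftrightarrow> proj_pt v = proj_pt (phi 1)"
proof
  assume "proj_pt (Inv v) = proj_pt v"
  then obtain c where c: "c \<noteq> 0" "Inv v = smult3 c v"
    by (auto simp: proj_pt_eq_iff)
  let ?t = "phi_inv v"
  have t: "?t \<in> Fq3" "?t \<noteq> 0"
    using assms by (simp_all add: phi_inv_in_Fq3 phi_inv_eq_0_iff)
  have "phi (inverse ?t) = phi (to_ac c * ?t)"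
    using c(2) by (simp add: Inv_def phi_smult t)
  then have "inverse ?t = to_ac c * ?t"
    using t by (simp add: phi_inject Fq3_closed)
  then have "?t\<^sup>2 = to_ac (inverse c)"
    using t(2) c(1) by (simp add: field_simps power2_eq_square)
  moreover obtain e where e: "e\<^sup>2 = inverse c"
    using square_root_exists[OF card m_pos] by blast
  ultimately have "?t ^ 2 ^ 1 = to_ac e ^ 2 ^ 1"
    by (simp flip: to_ac_power)
  then have "?t = to_ac e"
    using power_two_power_inj[of ?t 1 "to_ac e"] CHAR_2 by simp
  then have "v = smult3 e (phi 1)"
    using phi_smult[OF one_in_Fq3, of e] by (metis phi_phi_inv mult.right_neutral)
  moreover have "e \<noteq> 0"
    using e c(1) by auto
  ultimately show "proj_pt v = proj_pt (phi 1)"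
    by (simp add: proj_pt_smult3)
next
  assume "proj_pt v = proj_pt (phi 1)"
  then obtain c where "c \<noteq> 0" "v = smult3 c (phi 1)"
    by (auto simp: proj_pt_eq_iff)
  moreover have "Inv (phi 1) = phi 1"
    using one_in_Fq3 by (simp add: Inv_def)
  ultimately show "proj_pt (Inv v) = proj_pt v"
    by (simp add: Inv_smult3 proj_pt_smult3)
qed

lemma proj_map_Inv_fixed_iff:
  assumes "P \<in> P2"
  shows "proj_map Inv P = P \<longleftrightarrow> P = proj_pt (phi 1)"
proof -
  obtain v where v: "v \<noteq> (0, 0, 0)" "P = proj_pt v"
    using assms by (rule P2E)
  then have "proj_map Inv P = proj_pt (Inv v)"
    using proj_map_proj_pt[OF proj_compatible_Inv] by simp
  then show ?thesis
    using proj_pt_Inv_eq_iff[OF v(1)] v(2) by simp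
qed

lemma evenperm_proj_map_Inv: "evenperm (proj_map Inv) \<longleftrightarrow> even ((q\<^sup>2 + q) div 2)"
proof -
  have "proj_pt (phi 1) \<in> P2"
    using one_in_Fq3 by (simp add: phi_eq_0_iff proj_pt_in_P2)
  moreover have "{P. proj_map Inv P \<noteq> P} = P2 - {proj_pt (phi 1)}"
    using proj_map_Inv_fixed_iff proj_map_outside by fastforce
  ultimately have "card {P. proj_map Inv P \<noteq> P} = q\<^sup>2 + q"
    using card_P2[OF card] finite_P2 by (simp add: card_Diff_singleton)
  then show ?thesis
    using evenperm_involution[OF finite_P2 proj_map_Inv_permutes proj_map_Inv_involution] by simp
qed

end

theorem (in qt_without_rational_base_points) induced_map_permutes_parity:
  "induced_map C permutes P2 \<and> (evenperm (induced_map C) \<longleftrightarrow> m \<noteq> 1)"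
proof -
  obtain b i j k where "frob3 (frob3 (frob3 b)) = b" "base_point i b" "base_point j (frob3 b)"
    "base_point k (frob3 (frob3 b))" "distinct [i, j, k]"
    by (rule frob3_base_point_orbit)
  then interpret qt_base_point_orbit C m A B b i j k
    by unfold_locales
  have Lin: "proj_map Lin permutes P2" "evenperm (proj_map Lin)"
    using proj_map_permutes_linear3 evenperm_linear3 CHAR_2 linear3_Lin inj_Lin by blast+
  have "evenperm (induced_map C) \<longleftrightarrow> evenperm (proj_map Lin) = evenperm (proj_map Inv)"
    unfolding induced_map_eq
    by (rule evenperm_comp) (simp_all add: permutation_proj_map Lin(1) proj_map_Inv_permutes)
  then show ?thesis
    using Lin evenperm_proj_map_Inv even_half_pow2_square_add_pow2[OF m_pos]
      permutes_compose[OF proj_map_Inv_permutes Lin(1)] by (simp add: induced_map_eq)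
qed

theorem proposition4p7:
  fixes C D :: "nat \<Rightarrow> nat \<Rightarrow> nat \<Rightarrow> 'a::{field, finite}"
    and m :: nat
  assumes "m \<ge> 1"
    and "card (UNIV :: 'a set) = 2 ^ m"
    and "quadratic_transformation C"
    and "inverse_quadmap D C"
    and "\<forall>v::'a tri. v \<noteq> (0, 0, 0) \<longrightarrow> quadmap C v \<noteq> (0, 0, 0) \<and> quadmap D v \<noteq> (0, 0, 0)"
  shows "induced_map C permutes P2 \<and>
         (if m = 1 then \<not> evenperm (induced_map C) else evenperm (induced_map C))"
proof -
  obtain A B :: "nat \<Rightarrow> nat \<Rightarrow> 'a alg_closure" where AB: "det3 A \<noteq> 0" "det3 B \<noteq> 0"
    "\<And>v. quadmap (lift_coeffs C) v = linmap A (stdquad (linmap B v))"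
    using assms(3) unfolding quadratic_transformation_def by blast
  have "\<And>v::'a tri. v \<noteq> (0, 0, 0) \<Longrightarrow> quadmap C v \<noteq> (0, 0, 0)"
    using assms(5) by blast
  then interpret qt_without_rational_base_points C m A B
    using qt_without_rational_base_points.intro[OF assms(1,2) AB] by blast
  show ?thesis
    using induced_map_permutes_parity by simp
qed

end
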